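(* Let ${}_{\mathfrak Y}\mathfrak B_{\mathfrak X}$ be a left-fibrant graph of bisets, and let $\dagger\in\mathfrak Y$, $*\in\mathfrak X$ be vertices. For any vertex $x\in\mathfrak X$ and any $p\in\pi_1(\mathfrak X,x,* )$ let \[S(p)=\bigcup_{z\in\rho^{-1}(x)}\pi_1(\mathfrak Y,\dagger,\lambda(z))\otimes_{\widehat G_{\lambda(z)}}\widehat B_z\otimes_{\widehat G_{\rho(z)}}p,\] viewed as a left $\pi_1(\mathfrak Y,\dagger)$-set and as a subset of the set $S$ whose quotient by the equivalence relation $\sim$ defining the fundamental biset is $\pi_1(\mathfrak B,\dagger,* )$. Then for all such $p_1,p_2$, the relation $\sim$ restricted to $S(p_1)\times S(p_2)$ is the graph of an isomorphism of left $\pi_1(\mathfrak Y,\dagger)$-sets $S(p_1)\to S(p_2)$.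
   Context: Graphs and graphs of groups. A graph is a set $\mathfrak X=V\sqcup E$ with maps $x\mapsto x^-$, $x\mapsto\bar x$ such that $\bar{\bar x}=x$, $x^-\in V$, $x=x^-\iff x=\bar x\iff x\in V$; $x^+=(\bar x)^-$. Graph morphisms commute with $\bar{\ }$ and $^-$ (may send edges to vertices); simplicial if edges go to edges. A graph of groups is a connected graph with groups $G_x$ and homomorphisms $g\mapsto g^-\colon G_x\to G_{x^-}$, $g\mapsto\bar g\colon G_x\to G_{\bar x}$, with $G_x\to G_{\bar x}\to G_x$ the identity and both maps the identity for vertices; $g^+=(\bar g)^-$. Fundamental groupoid $\pi_1(\mathfrak X)$: objects $V$, generated by the $x\in\mathfrak X$ (from $x^-$ to $x^+$) and elements of the $G_v$, relations of the $G_v$, $v=1\in G_v$, $x\bar x=1$, $g^-x=xg^+$. $\pi_1(\mathfrak X,v,w)$: morphisms from $v$ to $w$. $\widehat G_x$: image of $G_x$ in $\pi_1(\mathfrak X)$. Graphs of bisets. A $\mathfrak Y$-$\mathfrak X$ graph of bisets: graph $\mathfrak B$, graph morphisms $\lambda\colon\mathfrak B\to\mathfrak Y$, $\rho\colon\mathfrak B\to\mathfrak X$, $G_{\lambda(z)}$-$G_{\rho(z)}$-bisets $B_z$, and congruences $b\mapsto b^-\colon B_z\to B_{z^-}$, $b\mapsto\bar b\colon B_z\to B_{\bar z}$ (i.e. $(hbg)^-=h^-b^-g^-$, etc.), with $B_z\to B_{\bar z}\to B_z$ the identity and both maps the identity for vertices; $b^+=(\bar b)^-$. $\widehat B_z=\widehat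 G_{\lambda(z)}\otimes_{G_{\lambda(z)}}B_z\otimes_{G_{\rho(z)}}\widehat G_{\rho(z)}$. Let $S=\bigsqcup_{z\in V(\mathfrak B)}\pi_1(\mathfrak Y,\dagger,\lambda(z))\otimes_{\widehat G_{\lambda(z)}}\widehat B_z\otimes_{\widehat G_{\rho(z)}}\pi_1(\mathfrak X,\rho(z),* )$, and let $\sim$ be the equivalence relation on $S$ generated by $q\otimes b^-\otimes p\sim q\lambda(z)\otimes b^+\otimes\overline{\rho(z)}p$ for edges $z\in\mathfrak B$, $b\in B_z$, $q\in\pi_1(\mathfrak Y,\dagger,\lambda(z)^-)$, $p\in\pi_1(\mathfrak X,\rho(z)^-,* )$ ($\lambda(z),\overline{\rho(z)}$ as groupoid morphisms, trivial if vertices); $S/{\sim}$ is the fundamental biset $\pi_1(\mathfrak B,\dagger,* )$. Left-fibrant: $\rho$ simplicial and for every vertex $v\in\mathfrak B$ and edge $f\in\mathfrak X$ with $f^-=\rho(v)$, the map $\bigsqcup_{e\in\rho^{-1}(f),\,e^-=v}G_{\lambda(v)}\otimes_{G_{\lambda(e)}}B_e\to B_v$, $g\otimes b\mapsto gb^-$, is an isomorphism of $G_{\lambda(v)}$-$G_f$-bisets. *)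

theory Defs
  imports "HOL-Algebra.Group"
begin

section \<open>Graphs (in the sense of Serre / the paper)\<close>

text \<open>A graph is a carrier set C with maps dn (x to x^-) and bar (x to xbar);
  vertices are the fixed points of dn.\<close>

definition gverts :: "'a set \<Rightarrow> ('a \<Rightarrow> 'a) \<Rightarrow> 'a set" where
  "gverts C dn = {x \<in> C. dn x = x}"

definition is_graph :: "'a set \<Rightarrow> ('a \<Rightarrow> 'a) \<Rightarrow> ('a \<Rightarrow> 'a) \<Rightarrow> bool" where
  "is_graph C dn bar \<longleftrightarrow>
     (\<forall>x\<in>C. bar x \<in> C \<and> dn x \<in> C \<and> bar (bar x) = x \<and> dn (dn x) = dn x
            \<and> ((x = dn x) \<longleftrightarrow> (x = bar x)))"

definition graph_connected :: "'a set \<Rightarrow> ('a \<Rightarrow> 'a) \<Rightarrow> ('a \<Rightarrow> 'a) \<Rightarrow> bool" where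
  "graph_connected C dn bar \<longleftrightarrow>
     (\<forall>v\<in>gverts C dn. \<forall>w\<in>gverts C dn.
        (\<lambda>a b. \<exists>e\<in>C. dn e = a \<and> dn (bar e) = b)\<^sup>*\<^sup>* v w)"

definition graph_mor ::
  "'a set \<Rightarrow> ('a \<Rightarrow> 'a) \<Rightarrow> ('a \<Rightarrow> 'a) \<Rightarrow> 'b set \<Rightarrow> ('b \<Rightarrow> 'b) \<Rightarrow> ('b \<Rightarrow> 'b) \<Rightarrow> ('a \<Rightarrow> 'b) \<Rightarrow> bool" where
  "graph_mor C dn bar C' dn' bar' f \<longleftrightarrow>
     (\<forall>x\<in>C. f x \<in> C' \<and> f (dn x) = dn' (f x) \<and> f (bar x) = bar' (f x))"

definition graph_simplicial ::
  "'a set \<Rightarrow> ('a \<Rightarrow> 'a) \<Rightarrow> 'b set \<Rightarrow> ('b \<Rightarrow> 'b) \<Rightarrow> ('a \<Rightarrow> 'b) \<Rightarrow> bool" where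
  "graph_simplicial C dn C' dn' f \<longleftrightarrow>
     (\<forall>x\<in>C. x \<notin> gverts C dn \<longrightarrow> f x \<notin> gverts C' dn')"

text \<open>grp x = G_x; hdn x : G_x \<rightarrow> G_{x^-} is g \<mapsto> g^-; hbar x : G_x \<rightarrow> G_{xbar} is g \<mapsto> gbar.\<close>

record ('a, 'g) gog =
  gcar :: "'a set"
  edn  :: "'a \<Rightarrow> 'a"
  ebar :: "'a \<Rightarrow> 'a"
  grp  :: "'a \<Rightarrow> 'g monoid"
  hdn  :: "'a \<Rightarrow> 'g \<Rightarrow> 'g"
  hbar :: "'a \<Rightarrow> 'g \<Rightarrow> 'g"

definition Vx :: "('a, 'g) gog \<Rightarrow> 'a set" where
  "Vx X = gverts (gcar X) (edn X)"

definition Ex_of :: "('a, 'g) gog \<Rightarrow> 'a set" where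
  "Ex_of X = gcar X - Vx X"

definition eup :: "('a, 'g) gog \<Rightarrow> 'a \<Rightarrow> 'a" where
  "eup X x = edn X (ebar X x)"

definition is_gog :: "('a, 'g) gog \<Rightarrow> bool" where
  "is_gog X \<longleftrightarrow>
     is_graph (gcar X) (edn X) (ebar X) \<and> graph_connected (gcar X) (edn X) (ebar X) \<and>
     (\<forall>x\<in>gcar X. group (grp X x)
        \<and> hdn X x \<in> hom (grp X x) (grp X (edn X x))
        \<and> hbar X x \<in> hom (grp X x) (grp X (ebar X x))
        \<and> (\<forall>g\<in>carrier (grp X x). hbar X (ebar X x) (hbar X x g) = g)) \<and>
     (\<forall>v\<in>Vx X. \<forall>g\<in>carrier (grp X v). hdn X v g = g \<and> hbar X v g = g)"

datatype ('a, 'g) letter = Gen 'a | Elt 'a 'g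

text \<open>Words are read left to right: Gen x goes from x^- to x^+; Elt v g is a loop at v.
  gwalk X v w t: the word w is a path from v to t.\<close>

fun gwalk :: "('a, 'g) gog \<Rightarrow> 'a \<Rightarrow> ('a, 'g) letter list \<Rightarrow> 'a \<Rightarrow> bool" where
  "gwalk X v [] t \<longleftrightarrow> v \<in> Vx X \<and> v = t"
| "gwalk X v (Gen x # ws) t \<longleftrightarrow> x \<in> gcar X \<and> edn X x = v \<and> gwalk X (eup X x) ws t"
| "gwalk X v (Elt u g # ws) t \<longleftrightarrow> u \<in> Vx X \<and> u = v \<and> g \<in> carrier (grp X u) \<and> gwalk X v ws t"

definition brel :: "('a, 'g) gog \<Rightarrow> ('a, 'g) letter list \<Rightarrow> ('a, 'g) letter list \<Rightarrow> bool" where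
  "brel X l r \<longleftrightarrow>
     (\<exists>v\<in>Vx X. \<exists>g\<in>carrier (grp X v). \<exists>h\<in>carrier (grp X v).
         l = [Elt v g, Elt v h] \<and> r = [Elt v (g \<otimes>\<^bsub>grp X v\<^esub> h)])
   \<or> (\<exists>v\<in>Vx X. l = [Elt v \<one>\<^bsub>grp X v\<^esub>] \<and> r = [])
   \<or> (\<exists>v\<in>Vx X. l = [Gen v] \<and> r = [])
   \<or> (\<exists>x\<in>gcar X. l = [Gen x, Gen (ebar X x)] \<and> r = [])
   \<or> (\<exists>x\<in>gcar X. \<exists>g\<in>carrier (grp X x).
         l = [Elt (edn X x) (hdn X x g), Gen x]
       \<and> r = [Gen x, Elt (eup X x) (hdn X (ebar X x) (hbar X x g))])"

definition gstep :: "('a, 'g) gog \<Rightarrow> 'a \<Rightarrow> ('a, 'g) letter list \<Rightarrow> ('a, 'g) letter list \<Rightarrow> bool" where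
  "gstep X v a b \<longleftrightarrow>
     (\<exists>u l r w. brel X l r \<and>
        ((a = u @ l @ w \<and> b = u @ r @ w) \<or> (a = u @ r @ w \<and> b = u @ l @ w)))
     \<and> (\<exists>t. gwalk X v a t) \<and> (\<exists>t. gwalk X v b t)"

definition gcls :: "('a, 'g) gog \<Rightarrow> 'a \<Rightarrow> ('a, 'g) letter list \<Rightarrow> ('a, 'g) letter list set" where
  "gcls X v a = {b. (gstep X v)\<^sup>*\<^sup>* a b}"

type_synonym ('a, 'g) gmor = "'a \<times> ('a, 'g) letter list set"

definition pi1 :: "('a, 'g) gog \<Rightarrow> 'a \<Rightarrow> 'a \<Rightarrow> ('a, 'g) gmor set" where
  "pi1 X v w = {(v, gcls X v a) | a. gwalk X v a w}"

definition gcomp :: "('a, 'g) gog \<Rightarrow> ('a, 'g) gmor \<Rightarrow> ('a, 'g) gmor \<Rightarrow> ('a, 'g) gmor" where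
  "gcomp X m n = (fst m, \<Union>{gcls X (fst m) (a @ b) | a b. a \<in> snd m \<and> b \<in> snd n})"

definition gel :: "('a, 'g) gog \<Rightarrow> 'a \<Rightarrow> 'g \<Rightarrow> ('a, 'g) gmor" where
  "gel X v g = (v, gcls X v [Elt v g])"

definition ggen :: "('a, 'g) gog \<Rightarrow> 'a \<Rightarrow> ('a, 'g) gmor" where
  "ggen X x = (edn X x, gcls X (edn X x) [Gen x])"

record ('b, 'c, 'y, 'x, 'gy, 'gx) gbs =
  bcar :: "'b set"
  bdn  :: "'b \<Rightarrow> 'b"
  bbar :: "'b \<Rightarrow> 'b"
  lam  :: "'b \<Rightarrow> 'y"
  rho  :: "'b \<Rightarrow> 'x"
  bset :: "'b \<Rightarrow> 'c set"
  lact :: "'b \<Rightarrow> 'gy \<Rightarrow> 'c \<Rightarrow> 'c"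
  ract :: "'b \<Rightarrow> 'c \<Rightarrow> 'gx \<Rightarrow> 'c"
  cdn  :: "'b \<Rightarrow> 'c \<Rightarrow> 'c"
  cbar :: "'b \<Rightarrow> 'c \<Rightarrow> 'c"

definition is_biset ::
  "'g monoid \<Rightarrow> 'h monoid \<Rightarrow> 'c set \<Rightarrow> ('g \<Rightarrow> 'c \<Rightarrow> 'c) \<Rightarrow> ('c \<Rightarrow> 'h \<Rightarrow> 'c) \<Rightarrow> bool" where
  "is_biset G H S l r \<longleftrightarrow>
     (\<forall>g\<in>carrier G. \<forall>s\<in>S. l g s \<in> S) \<and> (\<forall>s\<in>S. l \<one>\<^bsub>G\<^esub> s = s) \<and>
     (\<forall>g1\<in>carrier G. \<forall>g2\<in>carrier G. \<forall>s\<in>S. l (g1 \<otimes>\<^bsub>G\<^esub> g2) s = l g1 (l g2 s)) \<and>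
     (\<forall>h\<in>carrier H. \<forall>s\<in>S. r s h \<in> S) \<and> (\<forall>s\<in>S. r s \<one>\<^bsub>H\<^esub> = s) \<and>
     (\<forall>h1\<in>carrier H. \<forall>h2\<in>carrier H. \<forall>s\<in>S. r s (h1 \<otimes>\<^bsub>H\<^esub> h2) = r (r s h1) h2) \<and>
     (\<forall>g\<in>carrier G. \<forall>h\<in>carrier H. \<forall>s\<in>S. l g (r s h) = r (l g s) h)"

definition Vb :: "('b, 'c, 'y, 'x, 'gy, 'gx) gbs \<Rightarrow> 'b set" where
  "Vb B = gverts (bcar B) (bdn B)"

definition bup :: "('b, 'c, 'y, 'x, 'gy, 'gx) gbs \<Rightarrow> 'b \<Rightarrow> 'b" where
  "bup B z = bdn B (bbar B z)"

definition cup :: "('b, 'c, 'y, 'x, 'gy, 'gx) gbs \<Rightarrow> 'b \<Rightarrow> 'c \<Rightarrow> 'c" where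
  "cup B z b = cdn B (bbar B z) (cbar B z b)"

definition is_gbs ::
  "('y, 'gy) gog \<Rightarrow> ('x, 'gx) gog \<Rightarrow> ('b, 'c, 'y, 'x, 'gy, 'gx) gbs \<Rightarrow> bool" where
  "is_gbs Y X B \<longleftrightarrow>
     is_graph (bcar B) (bdn B) (bbar B) \<and>
     graph_mor (bcar B) (bdn B) (bbar B) (gcar Y) (edn Y) (ebar Y) (lam B) \<and>
     graph_mor (bcar B) (bdn B) (bbar B) (gcar X) (edn X) (ebar X) (rho B) \<and>
     (\<forall>z\<in>bcar B. is_biset (grp Y (lam B z)) (grp X (rho B z)) (bset B z) (lact B z) (ract B z)) \<and>
     (\<forall>z\<in>bcar B. \<forall>b\<in>bset B z.
        cdn B z b \<in> bset B (bdn B z) \<and> cbar B z b \<in> bset B (bbar B z) \<and>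
        cbar B (bbar B z) (cbar B z b) = b) \<and>
     (\<forall>z\<in>bcar B. \<forall>b\<in>bset B z. \<forall>h\<in>carrier (grp Y (lam B z)).
        cdn B z (lact B z h b) = lact B (bdn B z) (hdn Y (lam B z) h) (cdn B z b) \<and>
        cbar B z (lact B z h b) = lact B (bbar B z) (hbar Y (lam B z) h) (cbar B z b)) \<and>
     (\<forall>z\<in>bcar B. \<forall>b\<in>bset B z. \<forall>g\<in>carrier (grp X (rho B z)).
        cdn B z (ract B z b g) = ract B (bdn B z) (cdn B z b) (hdn X (rho B z) g) \<and>
        cbar B z (ract B z b g) = ract B (bbar B z) (cbar B z b) (hbar X (rho B z) g)) \<and>
     (\<forall>z\<in>Vb B. \<forall>b\<in>bset B z. cdn B z b = b \<and> cbar B z b = b)"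

text \<open>The biset G_{lam v} (x)_{G_{lam e}} B_e, realised as classes of pairs (g,b) under
  (g h^-, b) ~ (g, h b).\<close>

definition fstep ::
  "('y, 'gy) gog \<Rightarrow> ('b, 'c, 'y, 'x, 'gy, 'gx) gbs \<Rightarrow> 'b \<Rightarrow> 'b \<Rightarrow> 'gy \<times> 'c \<Rightarrow> 'gy \<times> 'c \<Rightarrow> bool" where
  "fstep Y B v e s t \<longleftrightarrow>
     fst s \<in> carrier (grp Y (lam B v)) \<and> fst t \<in> carrier (grp Y (lam B v)) \<and>
     snd s \<in> bset B e \<and> snd t \<in> bset B e \<and>
     (\<exists>h\<in>carrier (grp Y (lam B e)).
        fst s = fst t \<otimes>\<^bsub>grp Y (lam B v)\<^esub> hdn Y (lam B e) h \<and> snd t = lact B e h (snd s))"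

definition fcls ::
  "('y, 'gy) gog \<Rightarrow> ('b, 'c, 'y, 'x, 'gy, 'gx) gbs \<Rightarrow> 'b \<Rightarrow> 'b \<Rightarrow> 'gy \<times> 'c \<Rightarrow> ('gy \<times> 'c) set" where
  "fcls Y B v e s = {t. (\<lambda>a b. fstep Y B v e a b \<or> fstep Y B v e b a)\<^sup>*\<^sup>* s t}"

definition fdom ::
  "('y, 'gy) gog \<Rightarrow> ('b, 'c, 'y, 'x, 'gy, 'gx) gbs \<Rightarrow> 'b \<Rightarrow> 'x \<Rightarrow> ('b \<times> ('gy \<times> 'c) set) set" where
  "fdom Y B v f = {(e, fcls Y B v e (g, b)) | e g b.
      e \<in> bcar B \<and> rho B e = f \<and> bdn B e = v \<and> g \<in> carrier (grp Y (lam B v)) \<and> b \<in> bset B e}"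

definition fmap ::
  "('b, 'c, 'y, 'x, 'gy, 'gx) gbs \<Rightarrow> 'b \<Rightarrow> 'b \<times> ('gy \<times> 'c) set \<Rightarrow> 'c" where
  "fmap B v ec = (case (SOME t. t \<in> snd ec) of (g, b) \<Rightarrow> lact B v g (cdn B (fst ec) b))"

definition left_fibrant ::
  "('y, 'gy) gog \<Rightarrow> ('x, 'gx) gog \<Rightarrow> ('b, 'c, 'y, 'x, 'gy, 'gx) gbs \<Rightarrow> bool" where
  "left_fibrant Y X B \<longleftrightarrow>
     graph_simplicial (bcar B) (bdn B) (gcar X) (edn X) (rho B) \<and>
     (\<forall>v\<in>Vb B. \<forall>f\<in>Ex_of X. edn X f = rho B v \<longrightarrow>
        bij_betw (fmap B v) (fdom Y B v f) (bset B v) \<and>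
        (\<forall>ec\<in>fdom Y B v f. \<forall>g'\<in>carrier (grp Y (lam B v)).
           fmap B v (fst ec, \<Union>{fcls Y B v (fst ec) (g' \<otimes>\<^bsub>grp Y (lam B v)\<^esub> g, b) | g b. (g, b) \<in> snd ec})
             = lact B v g' (fmap B v ec)) \<and>
        (\<forall>ec\<in>fdom Y B v f. \<forall>k\<in>carrier (grp X f).
           fmap B v (fst ec, \<Union>{fcls Y B v (fst ec) (g, ract B (fst ec) b k) | g b. (g, b) \<in> snd ec})
             = ract B v (fmap B v ec) (hdn X f k)))"

type_synonym ('y, 'gy, 'c, 'x, 'gx) triple = "('y, 'gy) gmor \<times> 'c \<times> ('x, 'gx) gmor"

definition tdom ::
  "('y, 'gy) gog \<Rightarrow> ('x, 'gx) gog \<Rightarrow> ('b, 'c, 'y, 'x, 'gy, 'gx) gbs \<Rightarrow> 'y \<Rightarrow> 'x \<Rightarrow> 'b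
   \<Rightarrow> ('y, 'gy, 'c, 'x, 'gx) triple \<Rightarrow> bool" where
  "tdom Y X B dag st z s \<longleftrightarrow> z \<in> Vb B \<and> fst s \<in> pi1 Y dag (lam B z) \<and>
      fst (snd s) \<in> bset B z \<and> snd (snd s) \<in> pi1 X (rho B z) st"

text \<open>Balancing relations of the tensor product
  pi1(Y,dag,lam z) (x) B_z (x) pi1(X,rho z,st) over G_{lam z} and G_{rho z}.\<close>

definition tstep ::
  "('y, 'gy) gog \<Rightarrow> ('x, 'gx) gog \<Rightarrow> ('b, 'c, 'y, 'x, 'gy, 'gx) gbs \<Rightarrow> 'y \<Rightarrow> 'x \<Rightarrow> 'b
   \<Rightarrow> ('y, 'gy, 'c, 'x, 'gx) triple \<Rightarrow> ('y, 'gy, 'c, 'x, 'gx) triple \<Rightarrow> bool" where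
  "tstep Y X B dag st z s t \<longleftrightarrow> tdom Y X B dag st z s \<and> tdom Y X B dag st z t \<and>
     ((\<exists>h\<in>carrier (grp Y (lam B z)).
         fst s = gcomp Y (fst t) (gel Y (lam B z) h) \<and>
         fst (snd t) = lact B z h (fst (snd s)) \<and> snd (snd t) = snd (snd s))
    \<or> (\<exists>g\<in>carrier (grp X (rho B z)).
         fst t = fst s \<and> fst (snd s) = ract B z (fst (snd t)) g \<and>
         snd (snd t) = gcomp X (gel X (rho B z) g) (snd (snd s))))"

definition tcls ::
  "('y, 'gy) gog \<Rightarrow> ('x, 'gx) gog \<Rightarrow> ('b, 'c, 'y, 'x, 'gy, 'gx) gbs \<Rightarrow> 'y \<Rightarrow> 'x \<Rightarrow> 'b
   \<Rightarrow> ('y, 'gy, 'c, 'x, 'gx) triple \<Rightarrow> ('y, 'gy, 'c, 'x, 'gx) triple set" where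
  "tcls Y X B dag st z s = {t. (\<lambda>a b. tstep Y X B dag st z a b \<or> tstep Y X B dag st z b a)\<^sup>*\<^sup>* s t}"

definition Sset ::
  "('y, 'gy) gog \<Rightarrow> ('x, 'gx) gog \<Rightarrow> ('b, 'c, 'y, 'x, 'gy, 'gx) gbs \<Rightarrow> 'y \<Rightarrow> 'x
   \<Rightarrow> ('b \<times> ('y, 'gy, 'c, 'x, 'gx) triple set) set" where
  "Sset Y X B dag st = {(z, tcls Y X B dag st z s) | z s. tdom Y X B dag st z s}"

definition sstep ::
  "('y, 'gy) gog \<Rightarrow> ('x, 'gx) gog \<Rightarrow> ('b, 'c, 'y, 'x, 'gy, 'gx) gbs \<Rightarrow> 'y \<Rightarrow> 'x
   \<Rightarrow> 'b \<times> ('y, 'gy, 'c, 'x, 'gx) triple set \<Rightarrow> 'b \<times> ('y, 'gy, 'c, 'x, 'gx) triple set \<Rightarrow> bool" where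
  "sstep Y X B dag st s t \<longleftrightarrow>
     (\<exists>z\<in>bcar B - Vb B. \<exists>b\<in>bset B z.
      \<exists>q\<in>pi1 Y dag (edn Y (lam B z)). \<exists>p\<in>pi1 X (edn X (rho B z)) st.
        s = (bdn B z, tcls Y X B dag st (bdn B z) (q, cdn B z b, p)) \<and>
        t = (bup B z, tcls Y X B dag st (bup B z)
               (gcomp Y q (ggen Y (lam B z)), cup B z b, gcomp X (ggen X (ebar X (rho B z))) p)))"

definition simS ::
  "('y, 'gy) gog \<Rightarrow> ('x, 'gx) gog \<Rightarrow> ('b, 'c, 'y, 'x, 'gy, 'gx) gbs \<Rightarrow> 'y \<Rightarrow> 'x
   \<Rightarrow> 'b \<times> ('y, 'gy, 'c, 'x, 'gx) triple set \<Rightarrow> 'b \<times> ('y, 'gy, 'c, 'x, 'gx) triple set \<Rightarrow> bool" where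
  "simS Y X B dag st s t \<longleftrightarrow> s \<in> Sset Y X B dag st \<and> t \<in> Sset Y X B dag st \<and>
     (\<lambda>a b. sstep Y X B dag st a b \<or> sstep Y X B dag st b a)\<^sup>*\<^sup>* s t"

definition Sp ::
  "('y, 'gy) gog \<Rightarrow> ('x, 'gx) gog \<Rightarrow> ('b, 'c, 'y, 'x, 'gy, 'gx) gbs \<Rightarrow> 'y \<Rightarrow> 'x \<Rightarrow> 'x
   \<Rightarrow> ('x, 'gx) gmor \<Rightarrow> ('b \<times> ('y, 'gy, 'c, 'x, 'gx) triple set) set" where
  "Sp Y X B dag st x p = {(z, tcls Y X B dag st z (q, b, p)) | z q b.
      z \<in> Vb B \<and> rho B z = x \<and> q \<in> pi1 Y dag (lam B z) \<and> b \<in> bset B z}"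

definition Sact ::
  "('y, 'gy) gog \<Rightarrow> ('x, 'gx) gog \<Rightarrow> ('b, 'c, 'y, 'x, 'gy, 'gx) gbs \<Rightarrow> 'y \<Rightarrow> 'x
   \<Rightarrow> ('y, 'gy) gmor \<Rightarrow> 'b \<times> ('y, 'gy, 'c, 'x, 'gx) triple set
   \<Rightarrow> 'b \<times> ('y, 'gy, 'c, 'x, 'gx) triple set" where
  "Sact Y X B dag st r s = (fst s,
      \<Union>{tcls Y X B dag st (fst s) (gcomp Y r q, b, p) | q b p. (q, b, p) \<in> snd s})"

end

theory Submission
  imports Defs
begin

text \<open>An element of \<open>S(p)\<close>, \<open>p \<in> \<pi>\<^sub>1(X,x,*)\<close>, is represented by a state \<open>q \<otimes> b\<close> over \<open>x\<close>.
  Left-fibrancy allows one to transport such states along paths of \<open>X\<close>: to cross an edge \<open>f\<close>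
  of \<open>X\<close> one writes \<open>b = g b\<^sub>e\<^sup>-\<close> for the unique edge \<open>e\<close> of \<open>B\<close> above \<open>f\<close> and passes to
  \<open>q g \<lambda>(e) \<otimes> b\<^sub>e\<^sup>+\<close>, which is precisely a generating step of \<open>\<sim>\<close>. Transport respects the relations
  of \<open>\<pi>\<^sub>1(X)\<close> and the balancing of the tensor products, and transport along the inverse path
  undoes it. So the class of the state obtained by transporting a representative of \<open>s\<close>
  along its path to \<open>*\<close> is a complete invariant of \<open>\<sim>\<close> (each \<open>s\<close> is \<open>\<sim>\<close> to that transported state),
  it is injective on every \<open>S(p)\<close>, and its image does not depend on \<open>p\<close>. Matching equal
  invariants gives the bijection \<open>S(p\<^sub>1) \<rightarrow> S(p\<^sub>2)\<close>; it commutes with the left action because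
  transport commutes with prepending a loop at \<open>\<dagger>\<close>.\<close>

lemma rtranclp_symmetric_eq_equivclp: "(\<lambda>a b. r a b \<or> r b a)\<^sup>*\<^sup>* = equivclp r"
  by (simp add: equivclp_def symclp_def[abs_def])

lemma equivclp_class_eq:
  assumes "equivclp r a b"
  shows "Collect (equivclp r a) = Collect (equivclp r b)"
  using assms equivclp_trans[OF equivclp_sym[OF assms]] equivclp_trans[OF assms] by blast

lemma Collect_equivclp_eq_iff: "Collect (equivclp r a) = Collect (equivclp r b) \<longleftrightarrow> equivclp r a b"
proof
  assume "Collect (equivclp r a) = Collect (equivclp r b)"
  then have "equivclp r a a \<longleftrightarrow> equivclp r b a" by blast
  then show "equivclp r a b" by (simp add: equivclp_sym)
qed (rule equivclp_class_eq)

lemma equivclp_map_on: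
  assumes ab: "equivclp r a b" and a: "I a"
    and inv: "\<And>x y. r x y \<Longrightarrow> I x \<longleftrightarrow> I y"
    and map: "\<And>x y. r x y \<Longrightarrow> I x \<Longrightarrow> equivclp s (f x) (f y)"
  shows "equivclp s (f a) (f b)"
proof -
  from ab have "I b \<and> equivclp s (f a) (f b)"
  proof (induction rule: equivclp_induct)
    case base
    show ?case using a by simp
  next
    case (step y z)
    then have "I z" using inv by blast
    moreover have "equivclp s (f y) (f z)"
      using step.hyps(2)
    proof
      assume "r y z" then show ?thesis using step.IH map by blast
    next
      assume "r z y" then show ?thesis using \<open>I z\<close> map equivclp_sym by metis
    qed
    ultimately show ?case using step.IH by (blast intro: equivclp_trans)
  qed
  then show ?thesis ..
qed

lemma equivclp_invariant_on:
  assumes ab: "equivclp r a b" and a: "I a"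
    and inv: "\<And>x y. r x y \<Longrightarrow> I x \<longleftrightarrow> I y"
    and eq: "\<And>x y. r x y \<Longrightarrow> I x \<Longrightarrow> f x = f y"
  shows "f a = f b"
proof -
  from ab have "I b \<and> f a = f b"
  proof (induction rule: equivclp_induct)
    case (step y z)
    then have "I z" using inv by blast
    moreover have "f y = f z" using step.hyps(2) step.IH \<open>I z\<close> eq by (elim disjE) auto
    ultimately show ?case using step.IH by simp
  qed (use a in simp)
  then show ?thesis ..
qed

lemma equivclp_invariant:
  assumes "equivclp r a b" and "\<And>x y. r x y \<Longrightarrow> f x = f y"
  shows "f a = f b"
  by (rule equivclp_invariant_on[where I = "\<lambda>_. True", OF assms(1) TrueI]) (simp_all add: assms(2))

lemma matching_by_invariant:
  assumes S: "inj_on \<psi> S" and T: "inj_on \<psi> T" and im: "\<psi> ` S = \<psi> ` T"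
  obtains f where "bij_betw f S T" and "\<And>s. s \<in> S \<Longrightarrow> \<psi> (f s) = \<psi> s"
proof
  have "bij_betw \<psi> S (\<psi> ` T)" using S im by (simp add: bij_betw_def)
  moreover have "bij_betw (the_inv_into T \<psi>) (\<psi> ` T) T"
    using T by (simp add: bij_betw_the_inv_into inj_on_imp_bij_betw)
  ultimately show "bij_betw (the_inv_into T \<psi> \<circ> \<psi>) S T" by (rule bij_betw_trans)
  show "\<psi> ((the_inv_into T \<psi> \<circ> \<psi>) s) = \<psi> s" if "s \<in> S" for s
    using that im f_the_inv_into_f[OF T] by auto
qed

lemma Vx_iff: "v \<in> Vx G \<longleftrightarrow> v \<in> gcar G \<and> edn G v = v"
  by (simp add: Vx_def gverts_def)

lemma Ex_of_iff: "f \<in> Ex_of G \<longleftrightarrow> f \<in> gcar G \<and> f \<notin> Vx G"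
  by (simp add: Ex_of_def)

lemma gog_graph:
  assumes "is_gog G" "x \<in> gcar G"
  shows "ebar G x \<in> gcar G" "edn G x \<in> gcar G" "ebar G (ebar G x) = x"
    "edn G (edn G x) = edn G x" "(x = edn G x) \<longleftrightarrow> (x = ebar G x)"
  using assms by (auto simp: is_gog_def is_graph_def)

lemma gog_grp:
  assumes "is_gog G" "x \<in> gcar G"
  shows "group (grp G x)" "hdn G x \<in> hom (grp G x) (grp G (edn G x))"
    "hbar G x \<in> hom (grp G x) (grp G (ebar G x))"
    "g \<in> carrier (grp G x) \<Longrightarrow> hbar G (ebar G x) (hbar G x g) = g"
  using assms by (auto simp: is_gog_def)

lemma gog_Vx_group: "is_gog G \<Longrightarrow> v \<in> Vx G \<Longrightarrow> group (grp G v)"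
  by (simp add: Vx_iff gog_grp)

lemma gog_Vx_hom:
  assumes "is_gog G" "v \<in> Vx G" "g \<in> carrier (grp G v)"
  shows "hdn G v g = g" "hbar G v g = g"
  using assms by (auto simp: is_gog_def)

lemma hdn_carrier:
  "is_gog G \<Longrightarrow> x \<in> gcar G \<Longrightarrow> g \<in> carrier (grp G x) \<Longrightarrow> hdn G x g \<in> carrier (grp G (edn G x))"
  by (rule hom_in_carrier[OF gog_grp(2)])

lemma hbar_carrier:
  "is_gog G \<Longrightarrow> x \<in> gcar G \<Longrightarrow> g \<in> carrier (grp G x) \<Longrightarrow> hbar G x g \<in> carrier (grp G (ebar G x))"
  by (rule hom_in_carrier[OF gog_grp(3)])

lemma hdn_hbar_carrier:
  assumes "is_gog G" "x \<in> gcar G" "g \<in> carrier (grp G x)"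
  shows "hdn G (ebar G x) (hbar G x g) \<in> carrier (grp G (eup G x))"
  unfolding eup_def using assms by (intro hdn_carrier hbar_carrier gog_graph(1))

lemma edn_Vx: "is_gog G \<Longrightarrow> x \<in> gcar G \<Longrightarrow> edn G x \<in> Vx G"
  by (simp add: Vx_iff gog_graph)

lemma eup_Vx: "is_gog G \<Longrightarrow> x \<in> gcar G \<Longrightarrow> eup G x \<in> Vx G"
  by (simp add: eup_def edn_Vx gog_graph)

lemma Vx_ebar: "is_gog G \<Longrightarrow> v \<in> Vx G \<Longrightarrow> ebar G v = v"
  using gog_graph(5)[of G v] by (auto simp: Vx_iff)

lemma Vx_eup: "is_gog G \<Longrightarrow> v \<in> Vx G \<Longrightarrow> eup G v = v"
  by (simp add: eup_def Vx_ebar) (simp add: Vx_iff)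

lemma eup_ebar: "is_gog G \<Longrightarrow> x \<in> gcar G \<Longrightarrow> eup G (ebar G x) = edn G x"
  by (simp add: eup_def gog_graph)

lemma edn_ebar: "edn G (ebar G x) = eup G x"
  by (simp add: eup_def)

lemma gwalk_start: "is_gog G \<Longrightarrow> gwalk G v a t \<Longrightarrow> v \<in> Vx G"
  by (cases a rule: list.exhaust; cases "hd a") (auto simp: edn_Vx)

lemma gwalk_end: "gwalk G v a t \<Longrightarrow> t \<in> Vx G"
proof (induction a arbitrary: v)
  case (Cons l a) then show ?case by (cases l) auto
qed simp

lemma gwalk_unique: "gwalk G v a t \<Longrightarrow> gwalk G v a t' \<Longrightarrow> t = t'"
proof (induction a arbitrary: v)
  case (Cons l a) then show ?case by (cases l) auto
qed simp

lemma gwalk_append: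
  assumes "is_gog G"
  shows "gwalk G v (a @ b) t \<longleftrightarrow> (\<exists>m. gwalk G v a m \<and> gwalk G m b t)"
proof (induction a arbitrary: v)
  case Nil then show ?case using gwalk_start[OF assms] by auto
next
  case (Cons l a) then show ?case by (cases l) auto
qed

lemma gwalk_append3:
  assumes "is_gog G"
  shows "gwalk G v (u @ l @ w) t \<longleftrightarrow> (\<exists>m k. gwalk G v u m \<and> gwalk G m l k \<and> gwalk G k w t)"
  unfolding gwalk_append[OF assms] by blast

lemma gwalk_append_iff:
  assumes "is_gog G" and "gwalk G v a m"
  shows "gwalk G v (a @ b) t \<longleftrightarrow> gwalk G m b t"
proof
  assume "gwalk G v (a @ b) t"
  then obtain m' where "gwalk G v a m'" "gwalk G m' b t" unfolding gwalk_append[OF assms(1)] by blast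
  then show "gwalk G m b t" using gwalk_unique[OF assms(2)] by blast
next
  assume "gwalk G m b t"
  then show "gwalk G v (a @ b) t" unfolding gwalk_append[OF assms(1)] using assms(2) by blast
qed

lemma gwalk_Cons_split:
  assumes "is_gog G" and "gwalk G x (l # a) t"
  obtains x' where "gwalk G x [l] x'" "gwalk G x' a t"
  using assms(2) gwalk_append[OF assms(1), of x "[l]" a t] that by auto

lemma brel_cases:
  assumes "brel G l r"
  obtains (mult) v g h where "v \<in> Vx G" "g \<in> carrier (grp G v)" "h \<in> carrier (grp G v)"
      "l = [Elt v g, Elt v h]" "r = [Elt v (g \<otimes>\<^bsub>grp G v\<^esub> h)]"
  | (one) v where "v \<in> Vx G" "l = [Elt v \<one>\<^bsub>grp G v\<^esub>]" "r = []"
  | (vertex) v where "v \<in> Vx G" "l = [Gen v]" "r = []"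
  | (edge_inv) x where "x \<in> gcar G" "l = [Gen x, Gen (ebar G x)]" "r = []"
  | (edge_conj) x g where "x \<in> gcar G" "g \<in> carrier (grp G x)"
      "l = [Elt (edn G x) (hdn G x g), Gen x]"
      "r = [Gen x, Elt (eup G x) (hdn G (ebar G x) (hbar G x g))]"
  using assms unfolding brel_def by blast

lemma brel_mult: "v \<in> Vx G \<Longrightarrow> g \<in> carrier (grp G v) \<Longrightarrow> h \<in> carrier (grp G v) \<Longrightarrow>
    brel G [Elt v g, Elt v h] [Elt v (g \<otimes>\<^bsub>grp G v\<^esub> h)]"
  unfolding brel_def by (rule disjI1) simp

lemma brel_one: "v \<in> Vx G \<Longrightarrow> brel G [Elt v \<one>\<^bsub>grp G v\<^esub>] []"
  unfolding brel_def by (intro disjI2 disjI1) simp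

lemma brel_vertex: "v \<in> Vx G \<Longrightarrow> brel G [Gen v] []"
  unfolding brel_def by (intro disjI2 disjI1) simp

lemma brel_edge_inv: "x \<in> gcar G \<Longrightarrow> brel G [Gen x, Gen (ebar G x)] []"
  unfolding brel_def by (intro disjI2 disjI1) simp

lemma brel_edge_conj: "x \<in> gcar G \<Longrightarrow> g \<in> carrier (grp G x) \<Longrightarrow>
    brel G [Elt (edn G x) (hdn G x g), Gen x] [Gen x, Elt (eup G x) (hdn G (ebar G x) (hbar G x g))]"
  unfolding brel_def by (intro disjI2) (rule bexI[of _ x], rule bexI[of _ g], simp_all)

lemma brel_gwalk:
  assumes G: "is_gog G" and "brel G l r" and W: "gwalk G m l k"
  shows "gwalk G m r k"
  using assms(2)
proof (cases rule: brel_cases)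
  case (mult v g h)
  then have "g \<otimes>\<^bsub>grp G v\<^esub> h \<in> carrier (grp G v)"
    using gog_Vx_group[OF G] by (simp add: group.is_monoid monoid.m_closed)
  then show ?thesis using W mult by simp
next
  case (one v)
  then show ?thesis using W by simp
next
  case (vertex v)
  then have "eup G v = v" "edn G v = v" using Vx_eup[OF G] by (auto simp: Vx_iff)
  then show ?thesis using W vertex by auto
next
  case (edge_inv x)
  then have "edn G x = m" "eup G (ebar G x) = k" using W by simp_all
  then show ?thesis using edge_inv eup_ebar[OF G] edn_Vx[OF G] by force
next
  case (edge_conj x g)
  then have "edn G x = m" and k: "eup G x = k" using W by simp_all
  moreover have "k \<in> Vx G" "hdn G (ebar G x) (hbar G x g) \<in> carrier (grp G k)"
    using k hdn_hbar_carrier[OF G edge_conj(1,2)] eup_Vx[OF G edge_conj(1)] by simp_all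
  ultimately show ?thesis using edge_conj(1,4) by simp
qed

lemma gstepI:
  assumes "brel G l r" "a = u @ l @ w" "b = u @ r @ w" "gwalk G v a t" "gwalk G v b t'"
  shows "gstep G v a b"
  unfolding gstep_def using assms by blast

lemma gstep_brel:
  assumes G: "is_gog G" and br: "brel G l r" and W: "gwalk G v (u @ l @ w) t"
  shows "gstep G v (u @ l @ w) (u @ r @ w)" "gwalk G v (u @ r @ w) t"
proof -
  obtain m k where "gwalk G v u m" "gwalk G m l k" "gwalk G k w t"
    using W unfolding gwalk_append3[OF G] by blast
  with brel_gwalk[OF G br] show W': "gwalk G v (u @ r @ w) t"
    unfolding gwalk_append3[OF G] by blast
  show "gstep G v (u @ l @ w) (u @ r @ w)" by (rule gstepI[OF br refl refl W W'])
qed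

lemma gstep_sym: "gstep G v a b \<Longrightarrow> gstep G v b a"
  unfolding gstep_def by blast

lemma gstep_gwalk_imp:
  assumes G: "is_gog G" and "gstep G v a b" and "gwalk G v a t"
  shows "gwalk G v b t"
proof -
  obtain u l r w t' where br: "brel G l r" and bt: "gwalk G v b t'" and
    e: "(a = u @ l @ w \<and> b = u @ r @ w) \<or> (a = u @ r @ w \<and> b = u @ l @ w)"
    using assms(2) unfolding gstep_def by blast
  from e show ?thesis
  proof
    assume "a = u @ l @ w \<and> b = u @ r @ w"
    then show ?thesis using gstep_brel(2)[OF G br] assms(3) by simp
  next
    assume "a = u @ r @ w \<and> b = u @ l @ w"
    then have "gwalk G v a t'" using gstep_brel(2)[OF G br] bt by simp
    then show ?thesis using assms(3) bt gwalk_unique by metis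
  qed
qed

lemma gstep_gwalk_iff:
  "is_gog G \<Longrightarrow> gstep G v a b \<Longrightarrow> gwalk G v a t \<longleftrightarrow> gwalk G v b t"
  using gstep_gwalk_imp gstep_sym by metis

lemma rtranclp_gstep_eq_equivclp: "(gstep G v)\<^sup>*\<^sup>* = equivclp (gstep G v)"
proof -
  have "symclp (gstep G v) = gstep G v"
    by (auto simp: symclp_def[abs_def] intro: gstep_sym)
  then show ?thesis by (metis equivclp_def)
qed

lemma gcls_equivclp: "gcls G v a = Collect (equivclp (gstep G v) a)"
  by (simp add: gcls_def rtranclp_gstep_eq_equivclp)

lemma gcls_self: "a \<in> gcls G v a"
  by (simp add: gcls_def)

lemma gcls_eq: "equivclp (gstep G v) a b \<Longrightarrow> gcls G v a = gcls G v b"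
  by (simp add: gcls_equivclp equivclp_class_eq)

lemma gcls_gstep: "gstep G v a b \<Longrightarrow> gcls G v a = gcls G v b"
  by (simp add: gcls_eq r_into_equivclp)

lemma gequiv_gwalk_iff:
  assumes "is_gog G" and "equivclp (gstep G v) a b"
  shows "gwalk G v a t \<longleftrightarrow> gwalk G v b t"
  by (rule equivclp_invariant[where f = "\<lambda>a. gwalk G v a t", OF assms(2)])
     (simp add: gstep_gwalk_iff[OF assms(1)])

lemma gstep_append_right:
  assumes G: "is_gog G" and s: "gstep G v a a'" and wa: "gwalk G v a m" and wc: "gwalk G m c t"
  shows "gstep G v (a @ c) (a' @ c)"
proof -
  obtain u l r w where br: "brel G l r" and
    e: "(a = u @ l @ w \<and> a' = u @ r @ w) \<or> (a = u @ r @ w \<and> a' = u @ l @ w)"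
    using s unfolding gstep_def by blast
  have "gwalk G v (a @ c) t" "gwalk G v (a' @ c) t"
    using wa wc gstep_gwalk_iff[OF G s] by (auto simp: gwalk_append[OF G])
  then show ?thesis unfolding gstep_def using br e
    by (intro conjI exI[of _ u] exI[of _ l] exI[of _ r] exI[of _ "w @ c"]) auto
qed

lemma gstep_append_left:
  assumes G: "is_gog G" and s: "gstep G m c c'" and wa: "gwalk G v a m"
  shows "gstep G v (a @ c) (a @ c')"
proof -
  obtain u l r w where br: "brel G l r" and
    e: "(c = u @ l @ w \<and> c' = u @ r @ w) \<or> (c = u @ r @ w \<and> c' = u @ l @ w)"
    using s unfolding gstep_def by blast
  obtain t t' where "gwalk G m c t" "gwalk G m c' t'" using s unfolding gstep_def by blast
  then have "gwalk G v (a @ c) t" "gwalk G v (a @ c') t'"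
    using wa by (auto simp: gwalk_append[OF G])
  then show ?thesis unfolding gstep_def using br e
    by (intro conjI exI[of _ "a @ u"] exI[of _ l] exI[of _ r] exI[of _ w]) auto
qed

lemma gequiv_append_right:
  assumes G: "is_gog G" and "equivclp (gstep G v) a a'" and "gwalk G v a m" and "gwalk G m c t"
  shows "equivclp (gstep G v) (a @ c) (a' @ c)"
  using assms(2,3)
  by (rule equivclp_map_on[where I = "\<lambda>a. gwalk G v a m"])
     (auto intro: gstep_append_right[OF G _ _ assms(4)] dest: gstep_gwalk_iff[OF G])

lemma gequiv_append_left:
  assumes G: "is_gog G" and "equivclp (gstep G m) c c'" and "gwalk G v a m"
  shows "equivclp (gstep G v) (a @ c) (a @ c')"
  using assms(2)
  by (rule equivclp_map_on[where I = "\<lambda>_. True", OF _ TrueI])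
     (auto intro: gstep_append_left[OF G _ assms(3)])

lemma gcomp_gcls:
  assumes G: "is_gog G" and wa: "gwalk G v a w" and wb: "gwalk G w b t"
  shows "gcomp G (v, gcls G v a) (w, gcls G w b) = (v, gcls G v (a @ b))"
proof -
  have "gcls G v (a' @ b') = gcls G v (a @ b)" if a': "a' \<in> gcls G v a" and b': "b' \<in> gcls G w b" for a' b'
  proof -
    have ea: "equivclp (gstep G v) a a'" and eb: "equivclp (gstep G w) b b'"
      using a' b' by (simp_all add: gcls_equivclp)
    have "gwalk G v a' w" using gequiv_gwalk_iff[OF G ea] wa by simp
    then have "equivclp (gstep G v) (a @ b) (a' @ b')"
      using gequiv_append_right[OF G ea wa wb] gequiv_append_left[OF G eb]
      by (blast intro: equivclp_trans)
    then show ?thesis by (simp add: gcls_eq)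
  qed
  then have "\<Union>{gcls G v (a' @ b') | a' b'. a' \<in> gcls G v a \<and> b' \<in> gcls G w b} = gcls G v (a @ b)"
    using gcls_self[of a G v] gcls_self[of b G w] by blast
  then show ?thesis by (simp add: gcomp_def)
qed

lemma pi1_I: "gwalk G v a w \<Longrightarrow> (v, gcls G v a) \<in> pi1 G v w"
  by (auto simp: pi1_def)

lemma pi1_repr:
  assumes "p \<in> pi1 G v w"
  obtains a where "a \<in> snd p" "gwalk G v a w" "p = (v, gcls G v a)"
  using assms that gcls_self[of _ G v] by (auto simp: pi1_def)

lemma pi1_memD:
  assumes G: "is_gog G" and "p \<in> pi1 G v w" and "a \<in> snd p"
  shows "gwalk G v a w" "p = (v, gcls G v a)"
proof -
  obtain a0 where a0: "gwalk G v a0 w" "p = (v, gcls G v a0)" using assms(2) by (auto simp: pi1_def)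
  then have e: "equivclp (gstep G v) a0 a" using assms(3) by (simp add: gcls_equivclp)
  show "gwalk G v a w" "p = (v, gcls G v a)" using a0 gequiv_gwalk_iff[OF G e] gcls_eq[OF e] by simp_all
qed

lemma gel_pi1: "v \<in> Vx G \<Longrightarrow> g \<in> carrier (grp G v) \<Longrightarrow> gel G v g \<in> pi1 G v v"
  unfolding gel_def by (rule pi1_I) simp

lemma gcomp_pi1:
  assumes G: "is_gog G" and "p \<in> pi1 G u v" "q \<in> pi1 G v w"
  shows "gcomp G p q \<in> pi1 G u w"
proof -
  obtain a b where W: "gwalk G u a v" "gwalk G v b w" and pq: "p = (u, gcls G u a)" "q = (v, gcls G v b)"
    using pi1_repr[OF assms(2)] pi1_repr[OF assms(3)] by metis
  have "gwalk G u (a @ b) w" using W gwalk_append[OF G] by blast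
  then show ?thesis using gcomp_gcls[OF G W] pq pi1_I by simp
qed

lemma gcomp_assoc:
  assumes G: "is_gog G" and "p \<in> pi1 G u v" "q \<in> pi1 G v w" "r \<in> pi1 G w t"
  shows "gcomp G (gcomp G p q) r = gcomp G p (gcomp G q r)"
proof -
  obtain a b c where W: "gwalk G u a v" "gwalk G v b w" "gwalk G w c t"
    and pqr: "p = (u, gcls G u a)" "q = (v, gcls G v b)" "r = (w, gcls G w c)"
    using pi1_repr[OF assms(2)] pi1_repr[OF assms(3)] pi1_repr[OF assms(4)] by metis
  have "gwalk G u (a @ b) w" "gwalk G v (b @ c) t" using W gwalk_append[OF G] by blast+
  then show ?thesis using W pqr by (simp add: gcomp_gcls[OF G])
qed

lemma gcomp_ggen_right:
  assumes G: "is_gog G" and x: "x \<in> gcar G" and W: "gwalk G v a (edn G x)"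
  shows "gcomp G (v, gcls G v a) (ggen G x) = (v, gcls G v (a @ [Gen x]))"
  unfolding ggen_def using gcomp_gcls[OF G W, of "[Gen x]" "eup G x"] x eup_Vx[OF G x] by simp

lemma gcomp_ggen_left:
  assumes G: "is_gog G" and x: "x \<in> gcar G" and W: "gwalk G (eup G x) a t"
  shows "gcomp G (ggen G x) (eup G x, gcls G (eup G x) a) = (edn G x, gcls G (edn G x) (Gen x # a))"
  unfolding ggen_def using gcomp_gcls[OF G _ W, of "edn G x" "[Gen x]"] x eup_Vx[OF G x] by simp

lemma gcls_edge_inv:
  assumes G: "is_gog G" and x: "x \<in> gcar G" and W: "gwalk G v (Gen x # Gen (ebar G x) # a) t"
  shows "gcls G v (Gen x # Gen (ebar G x) # a) = gcls G v a"
  using gcls_gstep[OF gstep_brel(1)[OF G brel_edge_inv[OF x], of v "[]" a t]] W by simp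

lemma gcomp_ggen_ebar:
  assumes G: "is_gog G" and f: "f \<in> gcar G" and W: "gwalk G (edn G f) (Gen f # a) t"
  shows "gcomp G (ggen G (ebar G f)) (edn G f, gcls G (edn G f) (Gen f # a)) = (eup G f, gcls G (eup G f) a)"
proof -
  have fb: "ebar G f \<in> gcar G" "ebar G (ebar G f) = f" "eup G (ebar G f) = edn G f"
    using gog_graph(1,3)[OF G f] eup_ebar[OF G f] by simp_all
  have "gcomp G (ggen G (ebar G f)) (edn G f, gcls G (edn G f) (Gen f # a))
      = (eup G f, gcls G (eup G f) (Gen (ebar G f) # Gen f # a))"
    using gcomp_ggen_left[OF G fb(1), of "Gen f # a" t] W fb(3) by (simp add: edn_ebar)
  also have "\<dots> = (eup G f, gcls G (eup G f) a)"
    using gcls_edge_inv[OF G fb(1), of "eup G f" a t] W fb edn_Vx[OF G f] by (simp add: edn_ebar)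
  finally show ?thesis .
qed

lemma gequiv_backtrack:
  assumes G: "is_gog G" and x: "x \<in> gcar G" and W: "gwalk G v a (edn G x)"
  shows "equivclp (gstep G v) (a @ [Gen x, Elt (eup G x) \<one>\<^bsub>grp G (eup G x)\<^esub>, Gen (ebar G x)]) a"
proof -
  have xV: "eup G x \<in> Vx G" by (rule eup_Vx[OF G x])
  have W1: "gwalk G v ((a @ [Gen x]) @ [Elt (eup G x) \<one>\<^bsub>grp G (eup G x)\<^esub>] @ [Gen (ebar G x)]) (edn G x)"
    using gwalk_append_iff[OF G W] x xV gog_graph(1)[OF G x] eup_ebar[OF G x] edn_Vx[OF G x]
      gog_Vx_group[OF G xV] by (simp add: edn_ebar group.is_monoid monoid.one_closed)
  have "gstep G v ((a @ [Gen x]) @ [Elt (eup G x) \<one>\<^bsub>grp G (eup G x)\<^esub>] @ [Gen (ebar G x)])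
      ((a @ [Gen x]) @ [] @ [Gen (ebar G x)])"
    by (rule gstep_brel(1)[OF G brel_one[OF xV] W1])
  then have s1: "gstep G v (a @ [Gen x, Elt (eup G x) \<one>\<^bsub>grp G (eup G x)\<^esub>, Gen (ebar G x)])
      (a @ [Gen x, Gen (ebar G x)])" by simp
  have "gstep G v (a @ [Gen x, Gen (ebar G x)] @ []) (a @ [] @ [])"
    using gstep_brel(2)[OF G brel_one[OF xV] W1] by (intro gstep_brel(1)[OF G brel_edge_inv[OF x]]) simp
  then have s2: "gstep G v (a @ [Gen x, Gen (ebar G x)]) a" by simp
  show ?thesis by (rule equivclp_trans[OF r_into_equivclp[of "gstep G v", OF s1] r_into_equivclp[of "gstep G v", OF s2]])
qed

definition inv_letter :: "('x, 'gx) gog \<Rightarrow> ('x, 'gx) letter \<Rightarrow> ('x, 'gx) letter" where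
  "inv_letter G l = (case l of Gen x \<Rightarrow> Gen (ebar G x) | Elt u g \<Rightarrow> Elt u (inv\<^bsub>grp G u\<^esub> g))"

definition inv_word :: "('x, 'gx) gog \<Rightarrow> ('x, 'gx) letter list \<Rightarrow> ('x, 'gx) letter list" where
  "inv_word G a = rev (map (inv_letter G) a)"

lemma inv_word_Nil [simp]: "inv_word G [] = []"
  by (simp add: inv_word_def)

lemma inv_word_Cons [simp]: "inv_word G (l # a) = inv_word G a @ [inv_letter G l]"
  by (simp add: inv_word_def)

lemma inv_letter_gwalk:
  assumes G: "is_gog G" and w: "gwalk G x [l] y"
  shows "gwalk G y [inv_letter G l] x"
proof (cases l)
  case (Gen f)
  then show ?thesis
    using w gog_graph(1)[OF G] eup_ebar[OF G] edn_Vx[OF G] by (auto simp: inv_letter_def edn_ebar)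
next
  case (Elt u g)
  then show ?thesis using w gog_Vx_group[OF G] by (auto simp: inv_letter_def group.inv_closed)
qed

lemma inv_word_gwalk:
  assumes G: "is_gog G" and "gwalk G x a y"
  shows "gwalk G y (inv_word G a) x"
  using assms(2)
proof (induction a arbitrary: x)
  case (Cons l a)
  then obtain x' where "gwalk G x [l] x'" "gwalk G x' a y" using gwalk_Cons_split[OF G] by blast
  then show ?case using Cons.IH inv_letter_gwalk[OF G] gwalk_append[OF G] by (metis inv_word_Cons)
qed auto

lemma inv_letter_inv_letter:
  assumes G: "is_gog G" and w: "gwalk G x [l] y"
  shows "inv_letter G (inv_letter G l) = l"
  using w gog_graph(3)[OF G] gog_Vx_group[OF G]
  by (cases l) (auto simp: inv_letter_def group.inv_inv)

lemma inv_word_inv_word: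
  assumes G: "is_gog G" and "gwalk G x a y"
  shows "inv_word G (inv_word G a) = a"
  using assms(2)
proof (induction a arbitrary: x)
  case (Cons l a)
  then obtain x' where "gwalk G x [l] x'" "gwalk G x' a y" using gwalk_Cons_split[OF G] by blast
  then show ?case using Cons.IH inv_letter_inv_letter[OF G] by (simp add: inv_word_def)
qed simp

lemma Vb_iff: "z \<in> Vb B \<longleftrightarrow> z \<in> bcar B \<and> bdn B z = z"
  by (simp add: Vb_def gverts_def)

locale fibrant_gbs =
  fixes Y :: "('y, 'gy) gog" and X :: "('x, 'gx) gog"
    and B :: "('b, 'c, 'y, 'x, 'gy, 'gx) gbs"
  assumes Y: "is_gog Y" and X: "is_gog X" and B: "is_gbs Y X B" and LF: "left_fibrant Y X B"
begin

lemma bgraph: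
  assumes "z \<in> bcar B"
  shows "bbar B z \<in> bcar B" "bdn B z \<in> bcar B" "bbar B (bbar B z) = z"
    "bdn B (bdn B z) = bdn B z" "(z = bdn B z) \<longleftrightarrow> (z = bbar B z)"
  using B assms by (auto simp: is_gbs_def is_graph_def)

lemma lam_mor:
  assumes "z \<in> bcar B"
  shows "lam B z \<in> gcar Y" "lam B (bdn B z) = edn Y (lam B z)" "lam B (bbar B z) = ebar Y (lam B z)"
  using B assms by (auto simp: is_gbs_def graph_mor_def)

lemma rho_mor:
  assumes "z \<in> bcar B"
  shows "rho B z \<in> gcar X" "rho B (bdn B z) = edn X (rho B z)" "rho B (bbar B z) = ebar X (rho B z)"
  using B assms by (auto simp: is_gbs_def graph_mor_def)

lemma biset:
  "z \<in> bcar B \<Longrightarrow> is_biset (grp Y (lam B z)) (grp X (rho B z)) (bset B z) (lact B z) (ract B z)"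
  using B by (auto simp: is_gbs_def)

lemma cmaps:
  assumes "z \<in> bcar B" "b \<in> bset B z"
  shows "cdn B z b \<in> bset B (bdn B z)" "cbar B z b \<in> bset B (bbar B z)"
    "cbar B (bbar B z) (cbar B z b) = b"
  using B assms by (auto simp: is_gbs_def)

lemma cmaps_lact:
  assumes "z \<in> bcar B" "b \<in> bset B z" "h \<in> carrier (grp Y (lam B z))"
  shows "cdn B z (lact B z h b) = lact B (bdn B z) (hdn Y (lam B z) h) (cdn B z b)"
    "cbar B z (lact B z h b) = lact B (bbar B z) (hbar Y (lam B z) h) (cbar B z b)"
  using B assms unfolding is_gbs_def by blast+

lemma cmaps_ract:
  assumes "z \<in> bcar B" "b \<in> bset B z" "g \<in> carrier (grp X (rho B z))"
  shows "cdn B z (ract B z b g) = ract B (bdn B z) (cdn B z b) (hdn X (rho B z) g)"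
    "cbar B z (ract B z b g) = ract B (bbar B z) (cbar B z b) (hbar X (rho B z) g)"
  using B assms unfolding is_gbs_def by blast+

lemma Vb_lam: "z \<in> Vb B \<Longrightarrow> lam B z \<in> Vx Y"
  using lam_mor[of z] by (auto simp: Vb_iff Vx_iff)

lemma Vb_rho: "z \<in> Vb B \<Longrightarrow> rho B z \<in> Vx X"
  using rho_mor[of z] by (auto simp: Vb_iff Vx_iff)

lemma Vb_lam_group: "z \<in> Vb B \<Longrightarrow> group (grp Y (lam B z))"
  by (rule gog_Vx_group[OF Y Vb_lam])

lemma bdn_Vb: "z \<in> bcar B \<Longrightarrow> bdn B z \<in> Vb B"
  using bgraph[of z] by (simp add: Vb_iff)

lemma bup_Vb: "z \<in> bcar B \<Longrightarrow> bup B z \<in> Vb B"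
  unfolding bup_def using bgraph[of z] bdn_Vb by simp

lemma lam_bup: "z \<in> bcar B \<Longrightarrow> lam B (bup B z) = eup Y (lam B z)"
  unfolding bup_def eup_def using lam_mor bgraph by simp

lemma rho_bup: "z \<in> bcar B \<Longrightarrow> rho B (bup B z) = eup X (rho B z)"
  unfolding bup_def eup_def using rho_mor bgraph by simp

lemma cup_bset: "z \<in> bcar B \<Longrightarrow> b \<in> bset B z \<Longrightarrow> cup B z b \<in> bset B (bup B z)"
  unfolding cup_def bup_def using cmaps bgraph by simp

lemma cdn_bset: "e \<in> bcar B \<Longrightarrow> bdn B e = z \<Longrightarrow> b \<in> bset B e \<Longrightarrow> cdn B e b \<in> bset B z"
  using cmaps(1) by blast

lemma rho_edge: "e \<in> bcar B \<Longrightarrow> e \<notin> Vb B \<Longrightarrow> rho B e \<notin> Vx X"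
  using LF unfolding left_fibrant_def graph_simplicial_def Vb_def Vx_def by blast

lemma fibre_bij: "v \<in> Vb B \<Longrightarrow> f \<in> Ex_of X \<Longrightarrow> edn X f = rho B v \<Longrightarrow>
    bij_betw (fmap B v) (fdom Y B v f) (bset B v)"
  using LF unfolding left_fibrant_def by blast

lemma edge_bbar: "e \<in> bcar B \<Longrightarrow> e \<notin> Vb B \<Longrightarrow> bbar B e \<in> bcar B \<and> bbar B e \<notin> Vb B"
  using bgraph[of e] bgraph[of "bbar B e"] by (auto simp: Vb_iff)

lemma lact_closed:
  "z \<in> bcar B \<Longrightarrow> h \<in> carrier (grp Y (lam B z)) \<Longrightarrow> b \<in> bset B z \<Longrightarrow> lact B z h b \<in> bset B z"
  using biset[of z] unfolding is_biset_def by blast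

lemma lact_one: "z \<in> bcar B \<Longrightarrow> b \<in> bset B z \<Longrightarrow> lact B z \<one>\<^bsub>grp Y (lam B z)\<^esub> b = b"
  using biset[of z] unfolding is_biset_def by blast

lemma lact_mult:
  "z \<in> bcar B \<Longrightarrow> g1 \<in> carrier (grp Y (lam B z)) \<Longrightarrow> g2 \<in> carrier (grp Y (lam B z)) \<Longrightarrow>
   b \<in> bset B z \<Longrightarrow> lact B z (g1 \<otimes>\<^bsub>grp Y (lam B z)\<^esub> g2) b = lact B z g1 (lact B z g2 b)"
  using biset[of z] unfolding is_biset_def by blast

lemma ract_closed:
  "z \<in> bcar B \<Longrightarrow> h \<in> carrier (grp X (rho B z)) \<Longrightarrow> b \<in> bset B z \<Longrightarrow> ract B z b h \<in> bset B z"
  using biset[of z] unfolding is_biset_def by blast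

lemma ract_one: "z \<in> bcar B \<Longrightarrow> b \<in> bset B z \<Longrightarrow> ract B z b \<one>\<^bsub>grp X (rho B z)\<^esub> = b"
  using biset[of z] unfolding is_biset_def by blast

lemma ract_mult:
  "z \<in> bcar B \<Longrightarrow> h1 \<in> carrier (grp X (rho B z)) \<Longrightarrow> h2 \<in> carrier (grp X (rho B z)) \<Longrightarrow>
   b \<in> bset B z \<Longrightarrow> ract B z b (h1 \<otimes>\<^bsub>grp X (rho B z)\<^esub> h2) = ract B z (ract B z b h1) h2"
  using biset[of z] unfolding is_biset_def by blast

lemma lact_ract_comm:
  "z \<in> bcar B \<Longrightarrow> g \<in> carrier (grp Y (lam B z)) \<Longrightarrow> h \<in> carrier (grp X (rho B z)) \<Longrightarrow>
   b \<in> bset B z \<Longrightarrow> lact B z g (ract B z b h) = ract B z (lact B z g b) h"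
  using biset[of z] unfolding is_biset_def by blast

lemma cup_lact:
  assumes e: "e \<in> bcar B" and b: "b \<in> bset B e" and h: "h \<in> carrier (grp Y (lam B e))"
  shows "cup B e (lact B e h b) = lact B (bup B e) (hdn Y (ebar Y (lam B e)) (hbar Y (lam B e) h)) (cup B e b)"
proof -
  have hb: "hbar Y (lam B e) h \<in> carrier (grp Y (lam B (bbar B e)))"
    using hbar_carrier[OF Y lam_mor(1)[OF e] h] lam_mor(3)[OF e] by simp
  have "cup B e (lact B e h b) = cdn B (bbar B e) (lact B (bbar B e) (hbar Y (lam B e) h) (cbar B e b))"
    unfolding cup_def using cmaps_lact(2)[OF e b h] by simp
  also have "\<dots> = lact B (bup B e) (hdn Y (ebar Y (lam B e)) (hbar Y (lam B e) h)) (cup B e b)"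
    using cmaps_lact(1)[OF bgraph(1)[OF e] cmaps(2)[OF e b] hb] lam_mor(3)[OF e]
    by (simp add: cup_def bup_def)
  finally show ?thesis .
qed

lemma cup_ract:
  assumes e: "e \<in> bcar B" and b: "b \<in> bset B e" and g: "g \<in> carrier (grp X (rho B e))"
  shows "cup B e (ract B e b g) = ract B (bup B e) (cup B e b) (hdn X (ebar X (rho B e)) (hbar X (rho B e) g))"
proof -
  have hg: "hbar X (rho B e) g \<in> carrier (grp X (rho B (bbar B e)))"
    using hbar_carrier[OF X rho_mor(1)[OF e] g] rho_mor(3)[OF e] by simp
  have "cup B e (ract B e b g) = cdn B (bbar B e) (ract B (bbar B e) (cbar B e b) (hbar X (rho B e) g))"
    unfolding cup_def using cmaps_ract(2)[OF e b g] by simp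
  also have "\<dots> = ract B (bup B e) (cup B e b) (hdn X (ebar X (rho B e)) (hbar X (rho B e) g))"
    using cmaps_ract(1)[OF bgraph(1)[OF e] cmaps(2)[OF e b] hg] rho_mor(3)[OF e]
    by (simp add: cup_def bup_def)
  finally show ?thesis .
qed

end

definition fibre_decomp :: "('y, 'gy) gog \<Rightarrow> ('b, 'c, 'y, 'x, 'gy, 'gx) gbs \<Rightarrow> 'b \<Rightarrow> 'x \<Rightarrow> 'c
   \<Rightarrow> 'b \<times> ('gy \<times> 'c) set" where
  "fibre_decomp Y B z f b = inv_into (fdom Y B z f) (fmap B z) b"

context fibrant_gbs
begin

lemma fstep_lact_cdn:
  assumes st: "fstep Y B v e s t" and e: "e \<in> bcar B" and ev: "bdn B e = v"
  shows "lact B v (fst s) (cdn B e (snd s)) = lact B v (fst t) (cdn B e (snd t))"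
proof -
  obtain h where h: "h \<in> carrier (grp Y (lam B e))"
    and s1: "fst s = fst t \<otimes>\<^bsub>grp Y (lam B v)\<^esub> hdn Y (lam B e) h"
    and t2: "snd t = lact B e h (snd s)"
    and c: "fst t \<in> carrier (grp Y (lam B v))" "snd s \<in> bset B e"
    using st unfolding fstep_def by blast
  have vc: "v \<in> bcar B" using bgraph(2)[OF e] ev by simp
  have hh: "hdn Y (lam B e) h \<in> carrier (grp Y (lam B v))"
    using hdn_carrier[OF Y lam_mor(1)[OF e] h] lam_mor(2)[OF e] ev by simp
  have "lact B v (fst t) (cdn B e (snd t)) = lact B v (fst t) (lact B v (hdn Y (lam B e) h) (cdn B e (snd s)))"
    using t2 cmaps_lact(1)[OF e c(2) h] ev by simp
  also have "\<dots> = lact B v (fst s) (cdn B e (snd s))"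
    using lact_mult[OF vc c(1) hh cdn_bset[OF e ev c(2)]] s1 by simp
  finally show ?thesis by simp
qed

lemma fcls_equivclp: "fcls Y B v e s = Collect (equivclp (fstep Y B v e) s)"
  by (simp add: fcls_def rtranclp_symmetric_eq_equivclp)

lemma fcls_self: "s \<in> fcls Y B v e s"
  by (simp add: fcls_def)

lemma fmap_fcls:
  assumes e: "e \<in> bcar B" and ev: "bdn B e = v"
  shows "fmap B v (e, fcls Y B v e (g, b)) = lact B v g (cdn B e b)"
proof -
  define t where "t = (SOME t. t \<in> fcls Y B v e (g, b))"
  have "t \<in> fcls Y B v e (g, b)" unfolding t_def using fcls_self by (rule someI)
  then have "lact B v (fst (g, b)) (cdn B e (snd (g, b))) = lact B v (fst t) (cdn B e (snd t))"
    unfolding fcls_equivclp mem_Collect_eq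
    by (rule equivclp_invariant[where f = "\<lambda>s. lact B v (fst s) (cdn B e (snd s))"])
       (rule fstep_lact_cdn[OF _ e ev])
  then show ?thesis unfolding fmap_def t_def by (simp add: case_prod_beta)
qed

lemma fibre_decomp_fdom:
  assumes v: "v \<in> Vb B" and f: "f \<in> Ex_of X" and fv: "edn X f = rho B v" and b: "b \<in> bset B v"
  shows "fibre_decomp Y B v f b \<in> fdom Y B v f" "fmap B v (fibre_decomp Y B v f b) = b"
proof -
  have "b \<in> fmap B v ` fdom Y B v f" using fibre_bij[OF v f fv] b by (simp add: bij_betw_def)
  then show "fibre_decomp Y B v f b \<in> fdom Y B v f" "fmap B v (fibre_decomp Y B v f b) = b"
    unfolding fibre_decomp_def by (simp_all add: inv_into_into f_inv_into_f)
qed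

lemma fibre_decomp_eq:
  assumes v: "v \<in> Vb B" and f: "f \<in> Ex_of X" and fv: "edn X f = rho B v"
    and ec: "ec \<in> fdom Y B v f"
  shows "fibre_decomp Y B v f (fmap B v ec) = ec"
  using fibre_bij[OF v f fv] ec by (simp add: fibre_decomp_def bij_betw_def inv_into_f_f)

lemma fibre_decomp_obtain:
  assumes zV: "z \<in> Vb B" and f: "f \<in> gcar X" "f \<notin> Vx X" "edn X f = rho B z" and b: "b \<in> bset B z"
  obtains e g be where "fibre_decomp Y B z f b = (e, fcls Y B z e (g, be))"
    "e \<in> bcar B" "e \<notin> Vb B" "rho B e = f" "bdn B e = z"
    "g \<in> carrier (grp Y (lam B z))" "be \<in> bset B e" "b = lact B z g (cdn B e be)"
proof -
  have fE: "f \<in> Ex_of X" using f by (simp add: Ex_of_iff)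
  obtain e g be where E: "fibre_decomp Y B z f b = (e, fcls Y B z e (g, be))" "e \<in> bcar B"
    "rho B e = f" "bdn B e = z" "g \<in> carrier (grp Y (lam B z))" "be \<in> bset B e"
    using fibre_decomp_fdom(1)[OF zV fE f(3) b] unfolding fdom_def by blast
  have "b = lact B z g (cdn B e be)"
    using fibre_decomp_fdom(2)[OF zV fE f(3) b] E(1) fmap_fcls[OF E(2,4)] by simp
  moreover have "e \<notin> Vb B" using Vb_rho[of e] E(3) f(2) by auto
  ultimately show ?thesis using that[OF E(1,2) _ E(3-6)] by simp
qed

end

section \<open>Transport of states along paths of \<open>X\<close>\<close>

text \<open>A state \<open>(z, w, b)\<close> over \<open>x\<close> stands for \<open>[w] \<otimes> b \<in> \<pi>\<^sub>1(Y,\<dagger>,\<lambda> z) \<otimes> B\<^sub>z\<close>, where \<open>\<rho> z = x\<close>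
  and the word \<open>w\<close> is a path in \<open>Y\<close> from \<open>\<dagger>\<close> to \<open>\<lambda> z\<close>; states are identified along the
  relations of \<open>\<pi>\<^sub>1(Y)\<close> and the balancing over \<open>G\<^bsub>\<lambda> z\<^esub>\<close>.\<close>

fun state_over :: "('y, 'gy) gog \<Rightarrow> ('b, 'c, 'y, 'x, 'gy, 'gx) gbs \<Rightarrow> 'y \<Rightarrow> 'x
   \<Rightarrow> 'b \<times> ('y, 'gy) letter list \<times> 'c \<Rightarrow> bool" where
  "state_over Y B dag x (z, qw, b) \<longleftrightarrow> z \<in> Vb B \<and> rho B z = x \<and> gwalk Y dag qw (lam B z) \<and> b \<in> bset B z"

definition state_step :: "('y, 'gy) gog \<Rightarrow> ('b, 'c, 'y, 'x, 'gy, 'gx) gbs \<Rightarrow> 'y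
   \<Rightarrow> 'b \<times> ('y, 'gy) letter list \<times> 'c \<Rightarrow> 'b \<times> ('y, 'gy) letter list \<times> 'c \<Rightarrow> bool" where
  "state_step Y B dag \<sigma> \<tau> \<longleftrightarrow> (\<exists>z qw b qw' b'. \<sigma> = (z, qw, b) \<and> \<tau> = (z, qw', b') \<and> z \<in> Vb B \<and>
     gwalk Y dag qw (lam B z) \<and> gwalk Y dag qw' (lam B z) \<and> b \<in> bset B z \<and> b' \<in> bset B z \<and>
     ((gstep Y dag qw qw' \<and> b = b') \<or>
      (\<exists>h\<in>carrier (grp Y (lam B z)). qw = qw' @ [Elt (lam B z) h] \<and> b' = lact B z h b)))"

abbreviation state_eq :: "('y, 'gy) gog \<Rightarrow> ('b, 'c, 'y, 'x, 'gy, 'gx) gbs \<Rightarrow> 'y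
   \<Rightarrow> 'b \<times> ('y, 'gy) letter list \<times> 'c \<Rightarrow> 'b \<times> ('y, 'gy) letter list \<times> 'c \<Rightarrow> bool" where
  "state_eq Y B dag \<equiv> equivclp (state_step Y B dag)"

text \<open>Crossing the edge \<open>e\<close> of \<open>B\<close> with \<open>e\<^sup>- = z\<close> carries \<open>q g \<otimes> b\<^sup>-\<close> to \<open>q g \<lambda>(e) \<otimes> b\<^sup>+\<close>; this is
  the relation \<open>\<sim>\<close> defining the fundamental biset.\<close>

definition cross_edge :: "('b, 'c, 'y, 'x, 'gy, 'gx) gbs \<Rightarrow> 'b \<Rightarrow> ('y, 'gy) letter list \<Rightarrow> 'b \<Rightarrow> 'gy \<times> 'c
   \<Rightarrow> 'b \<times> ('y, 'gy) letter list \<times> 'c" where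
  "cross_edge B z qw e gb = (bup B e, qw @ [Elt (lam B z) (fst gb), Gen (lam B e)], cup B e (snd gb))"

fun transport1 :: "('x, 'gx) gog \<Rightarrow> ('y, 'gy) gog \<Rightarrow> ('b, 'c, 'y, 'x, 'gy, 'gx) gbs \<Rightarrow> ('x, 'gx) letter
   \<Rightarrow> 'b \<times> ('y, 'gy) letter list \<times> 'c \<Rightarrow> 'b \<times> ('y, 'gy) letter list \<times> 'c" where
  "transport1 X Y B (Elt u g) (z, qw, b) = (z, qw, ract B z b g)"
| "transport1 X Y B (Gen f) (z, qw, b) = (if f \<in> Vx X then (z, qw, b)
      else cross_edge B z qw (fst (fibre_decomp Y B z f b)) (SOME t. t \<in> snd (fibre_decomp Y B z f b)))"

definition transport :: "('x, 'gx) gog \<Rightarrow> ('y, 'gy) gog \<Rightarrow> ('b, 'c, 'y, 'x, 'gy, 'gx) gbs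
   \<Rightarrow> ('x, 'gx) letter list \<Rightarrow> 'b \<times> ('y, 'gy) letter list \<times> 'c \<Rightarrow> 'b \<times> ('y, 'gy) letter list \<times> 'c" where
  "transport X Y B a \<sigma> = fold (transport1 X Y B) a \<sigma>"

lemma transport_Nil [simp]: "transport X Y B [] \<sigma> = \<sigma>"
  by (simp add: transport_def)

lemma transport_Cons [simp]: "transport X Y B (l # a) \<sigma> = transport X Y B a (transport1 X Y B l \<sigma>)"
  by (simp add: transport_def)

lemma transport_append: "transport X Y B (a @ c) \<sigma> = transport X Y B c (transport X Y B a \<sigma>)"
  by (simp add: transport_def)

lemma state_over_rho: "state_over Y B dag x \<sigma> \<Longrightarrow> rho B (fst \<sigma>) = x"
  by (cases \<sigma>) auto

context fibrant_gbs
begin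

lemma state_step_fst: "state_step Y B dag \<sigma> \<tau> \<Longrightarrow> fst \<sigma> = fst \<tau>"
  unfolding state_step_def by auto

lemma state_step_over: "state_step Y B dag \<sigma> \<tau> \<Longrightarrow> state_over Y B dag x \<sigma> \<longleftrightarrow> state_over Y B dag x \<tau>"
  unfolding state_step_def by auto

lemma state_eq_fst:
  assumes "state_eq Y B dag \<sigma> \<tau>"
  shows "fst \<sigma> = fst \<tau>"
  using assms by (rule equivclp_invariant) (rule state_step_fst)

lemma state_eq_over: "state_eq Y B dag \<sigma> \<tau> \<Longrightarrow> state_over Y B dag x \<sigma> \<Longrightarrow> state_over Y B dag x \<tau>"
  using equivclp_invariant[where f = "state_over Y B dag x"] state_step_over by metis

lemma state_eq_gstep:
  assumes z: "z \<in> Vb B" and W: "gwalk Y dag qw (lam B z)" and s: "gstep Y dag qw qw'" and b: "b \<in> bset B z"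
  shows "state_eq Y B dag (z, qw, b) (z, qw', b)"
proof (rule r_into_equivclp)
  have "gwalk Y dag qw' (lam B z)" using gstep_gwalk_iff[OF Y s] W by simp
  then show "state_step Y B dag (z, qw, b) (z, qw', b)" unfolding state_step_def using z W s b by auto
qed

lemma state_eq_gequiv:
  assumes z: "z \<in> Vb B" and W: "gwalk Y dag qw (lam B z)" and e: "equivclp (gstep Y dag) qw qw'"
    and b: "b \<in> bset B z"
  shows "state_eq Y B dag (z, qw, b) (z, qw', b)"
  using e W
  by (rule equivclp_map_on[where f = "\<lambda>w. (z, w, b)" and I = "\<lambda>w. gwalk Y dag w (lam B z)"])
     (simp_all add: gstep_gwalk_iff[OF Y] state_eq_gstep[OF z _ _ b])

lemma state_eq_absorb:
  assumes z: "z \<in> Vb B" and W: "gwalk Y dag qw (lam B z)" and h: "h \<in> carrier (grp Y (lam B z))"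
    and b: "b \<in> bset B z"
  shows "state_eq Y B dag (z, qw @ [Elt (lam B z) h], b) (z, qw, lact B z h b)"
proof (rule r_into_equivclp)
  have "gwalk Y dag (qw @ [Elt (lam B z) h]) (lam B z)"
    using gwalk_append_iff[OF Y W] Vb_lam[OF z] h by simp
  moreover have "lact B z h b \<in> bset B z" using lact_closed z h b by (simp add: Vb_iff)
  ultimately show "state_step Y B dag (z, qw @ [Elt (lam B z) h], b) (z, qw, lact B z h b)"
    unfolding state_step_def using z W h b by auto
qed

lemma cross_edge_gwalk:
  assumes e: "e \<in> bcar B" "bdn B e = z" and g: "g \<in> carrier (grp Y (lam B z))"
  shows "gwalk Y (lam B z) [Elt (lam B z) g, Gen (lam B e)] (lam B (bup B e))"
  using Vb_lam[OF bdn_Vb[OF e(1)]] e g lam_mor(1,2)[OF e(1)] eup_Vx[OF Y lam_mor(1)[OF e(1)]] lam_bup[OF e(1)]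
  by simp

lemma cross_edge_over:
  assumes e: "e \<in> bcar B" and ez: "bdn B e = z" and g: "g \<in> carrier (grp Y (lam B z))"
    and be: "be \<in> bset B e" and W: "gwalk Y dag qw (lam B z)"
  shows "state_over Y B dag (eup X (rho B e)) (cross_edge B z qw e (g, be))"
proof -
  have "gwalk Y dag (qw @ [Elt (lam B z) g, Gen (lam B e)]) (lam B (bup B e))"
    unfolding gwalk_append_iff[OF Y W] by (rule cross_edge_gwalk[OF e ez g])
  then show ?thesis unfolding cross_edge_def
    using bup_Vb[OF e] rho_bup[OF e] cup_bset[OF e be] by simp
qed

lemma cross_edge_gstep:
  assumes e: "e \<in> bcar B" "bdn B e = z" and W: "gwalk Y dag qw (lam B z)" and s: "gstep Y dag qw qw'"
    and g: "g \<in> carrier (grp Y (lam B z))" and be: "be \<in> bset B e"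
  shows "state_eq Y B dag (cross_edge B z qw e (g, be)) (cross_edge B z qw' e (g, be))"
proof -
  have tail: "gwalk Y (lam B z) [Elt (lam B z) g, Gen (lam B e)] (lam B (bup B e))"
    by (rule cross_edge_gwalk[OF e g])
  then have "gwalk Y dag (qw @ [Elt (lam B z) g, Gen (lam B e)]) (lam B (bup B e))"
    unfolding gwalk_append_iff[OF Y W] .
  then show ?thesis unfolding cross_edge_def
    using state_eq_gstep[OF bup_Vb[OF e(1)] _ gstep_append_right[OF Y s W tail] cup_bset[OF e(1) be]] by simp
qed

lemma cross_edge_absorb:
  assumes e: "e \<in> bcar B" "bdn B e = z" and W: "gwalk Y dag qw (lam B z)"
    and h: "h \<in> carrier (grp Y (lam B z))" and g: "g \<in> carrier (grp Y (lam B z))" and be: "be \<in> bset B e"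
  shows "state_eq Y B dag (cross_edge B z (qw @ [Elt (lam B z) h]) e (g, be))
     (cross_edge B z qw e (h \<otimes>\<^bsub>grp Y (lam B z)\<^esub> g, be))"
proof -
  have lz: "lam B z \<in> Vx Y" using Vb_lam[OF bdn_Vb[OF e(1)]] e(2) by simp
  have Wa: "gwalk Y dag (qw @ [Elt (lam B z) h, Elt (lam B z) g] @ [Gen (lam B e)]) (lam B (bup B e))"
    using gwalk_append_iff[OF Y W] lz h cross_edge_gwalk[OF e g] Vb_lam[OF bup_Vb[OF e(1)]] by simp
  show ?thesis unfolding cross_edge_def
    using state_eq_gstep[OF bup_Vb[OF e(1)] Wa gstep_brel(1)[OF Y brel_mult[OF lz h g] Wa] cup_bset[OF e(1) be]]
    by simp
qed

text \<open>The relation \<open>g\<^sup>- x = x g\<^sup>+\<close> of \<open>\<pi>\<^sub>1(Y)\<close> moves an element of \<open>G\<^bsub>\<lambda> e\<^esub>\<close> across \<open>\<lambda> e\<close>.\<close>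

lemma state_eq_slide_edge:
  assumes e: "e \<in> bcar B" and ez: "bdn B e = z" and W: "gwalk Y dag qw (lam B z)"
    and h: "h \<in> carrier (grp Y (lam B e))" and c: "c \<in> bset B (bup B e)"
  shows "state_eq Y B dag (bup B e, qw @ [Elt (lam B z) (hdn Y (lam B e) h), Gen (lam B e)], c)
           (bup B e, qw @ [Gen (lam B e)], lact B (bup B e) (hdn Y (ebar Y (lam B e)) (hbar Y (lam B e) h)) c)"
proof -
  define x where "x = lam B e"
  have x: "x \<in> gcar Y" "edn Y x = lam B z" using lam_mor(1,2)[OF e] ez x_def by auto
  have zV: "z \<in> Vb B" using bdn_Vb[OF e] ez by simp
  have uV: "bup B e \<in> Vb B" and ux: "lam B (bup B e) = eup Y x" using bup_Vb[OF e] lam_bup[OF e] x_def by auto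
  have hx: "h \<in> carrier (grp Y x)" using h x_def by simp
  have W1: "gwalk Y dag (qw @ [Elt (edn Y x) (hdn Y x h), Gen x] @ []) (eup Y x)"
    using gwalk_append_iff[OF Y W] Vb_lam[OF zV] hdn_carrier[OF Y x(1) hx] x eup_Vx[OF Y x(1)] by simp
  have S: "gstep Y dag (qw @ [Elt (edn Y x) (hdn Y x h), Gen x] @ [])
      (qw @ [Gen x, Elt (eup Y x) (hdn Y (ebar Y x) (hbar Y x h))] @ [])"
    by (rule gstep_brel(1)[OF Y brel_edge_conj[OF x(1) hx] W1])
  have "state_eq Y B dag (bup B e, qw @ [Elt (lam B z) (hdn Y x h), Gen x], c)
      (bup B e, (qw @ [Gen x]) @ [Elt (lam B (bup B e)) (hdn Y (ebar Y x) (hbar Y x h))], c)"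
    using state_eq_gstep[OF uV _ S c] W1 ux x by simp
  also have "state_eq Y B dag \<dots> (bup B e, qw @ [Gen x], lact B (bup B e) (hdn Y (ebar Y x) (hbar Y x h)) c)"
  proof -
    have "gwalk Y dag (qw @ [Gen x]) (lam B (bup B e))"
      using gwalk_append_iff[OF Y W] x eup_Vx[OF Y x(1)] ux by simp
    moreover have "hdn Y (ebar Y x) (hbar Y x h) \<in> carrier (grp Y (lam B (bup B e)))"
      using hdn_hbar_carrier[OF Y x(1) hx] ux by simp
    ultimately have "state_eq Y B dag (bup B e, (qw @ [Gen x]) @ [Elt (lam B (bup B e)) (hdn Y (ebar Y x) (hbar Y x h))], c)
      (bup B e, qw @ [Gen x], lact B (bup B e) (hdn Y (ebar Y x) (hbar Y x h)) c)"
      by (rule state_eq_absorb[OF uV _ _ c])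
    then show ?thesis by simp
  qed
  finally show ?thesis unfolding x_def .
qed

lemma cross_edge_fstep:
  assumes e: "e \<in> bcar B" and ez: "bdn B e = z" and W: "gwalk Y dag qw (lam B z)"
    and st: "fstep Y B z e s t"
  shows "state_eq Y B dag (cross_edge B z qw e s) (cross_edge B z qw e t)"
proof -
  obtain h where h: "h \<in> carrier (grp Y (lam B e))"
    and s1: "fst s = fst t \<otimes>\<^bsub>grp Y (lam B z)\<^esub> hdn Y (lam B e) h"
    and t2: "snd t = lact B e h (snd s)"
    and c: "fst t \<in> carrier (grp Y (lam B z))" "snd s \<in> bset B e"
    using st unfolding fstep_def by blast
  have zV: "z \<in> Vb B" using bdn_Vb[OF e] ez by simp
  have uV: "bup B e \<in> Vb B" using bup_Vb[OF e] .
  have hz: "hdn Y (lam B e) h \<in> carrier (grp Y (lam B z))"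
    using hdn_carrier[OF Y lam_mor(1)[OF e] h] lam_mor(2)[OF e] ez by simp
  have cs: "cup B e (snd s) \<in> bset B (bup B e)" using cup_bset[OF e c(2)] .
  have W0: "gwalk Y dag (qw @ [Elt (lam B z) (fst t)]) (lam B z)"
    using gwalk_append_iff[OF Y W] Vb_lam[OF zV] c(1) by simp
  have Wm: "gwalk Y dag (qw @ [Elt (lam B z) (fst t), Elt (lam B z) (hdn Y (lam B e) h)] @ [Gen (lam B e)])
      (lam B (bup B e))"
    using gwalk_append_iff[OF Y W] Vb_lam[OF zV] c(1) hz lam_mor(1,2)[OF e] ez
      eup_Vx[OF Y lam_mor(1)[OF e]] lam_bup[OF e] by simp
  have "state_eq Y B dag (cross_edge B z qw e s)
      (bup B e, qw @ [Elt (lam B z) (fst t), Elt (lam B z) (hdn Y (lam B e) h)] @ [Gen (lam B e)], cup B e (snd s))"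
    using state_eq_gstep[OF uV Wm gstep_brel(1)[OF Y brel_mult[OF Vb_lam[OF zV] c(1) hz] Wm] cs]
    unfolding cross_edge_def s1 by (simp add: equivclp_sym)
  also have "state_eq Y B dag \<dots> (cross_edge B z qw e t)"
    using state_eq_slide_edge[OF e ez W0 h cs] cup_lact[OF e c(2) h] t2
    unfolding cross_edge_def by simp
  finally show ?thesis .
qed

lemma cross_edge_fcls:
  assumes e: "e \<in> bcar B" and ez: "bdn B e = z" and W: "gwalk Y dag qw (lam B z)"
    and t: "t \<in> fcls Y B z e s"
  shows "state_eq Y B dag (cross_edge B z qw e s) (cross_edge B z qw e t)"
  using t unfolding fcls_equivclp mem_Collect_eq
  by (rule equivclp_map_on[where I = "\<lambda>_. True", OF _ TrueI])
     (simp_all add: cross_edge_fstep[OF e ez W])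

end

context fibrant_gbs
begin

lemma transport1_edge:
  assumes zV: "z \<in> Vb B" and f: "f \<notin> Vx X" "edn X f = rho B z"
    and e: "e \<in> bcar B" "rho B e = f" "bdn B e = z"
    and g: "g \<in> carrier (grp Y (lam B z))" and be: "be \<in> bset B e" and W: "gwalk Y dag qw (lam B z)"
  shows "state_eq Y B dag (transport1 X Y B (Gen f) (z, qw, lact B z g (cdn B e be))) (cross_edge B z qw e (g, be))"
proof -
  define ec where "ec = (e, fcls Y B z e (g, be))"
  have ecd: "ec \<in> fdom Y B z f" unfolding fdom_def ec_def using e g be by blast
  have fE: "f \<in> Ex_of X" using rho_mor(1)[OF e(1)] e(2) f(1) by (simp add: Ex_of_iff)
  have "fibre_decomp Y B z f (lact B z g (cdn B e be)) = ec"
    using fibre_decomp_eq[OF zV fE f(2) ecd] fmap_fcls[OF e(1,3)] by (simp add: ec_def)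
  moreover have t: "(SOME t. t \<in> fcls Y B z e (g, be)) \<in> fcls Y B z e (g, be)"
    using fcls_self by (rule someI)
  ultimately show ?thesis
    using equivclp_sym[OF cross_edge_fcls[OF e(1,3) W t]] f(1) by (simp add: ec_def)
qed

lemma transport1_edge_obtain:
  assumes v: "state_over Y B dag x (z, qw, b)" and f: "f \<in> gcar X" "f \<notin> Vx X" "edn X f = x"
  obtains e g be where "e \<in> bcar B" "e \<notin> Vb B" "rho B e = f" "bdn B e = z"
    "g \<in> carrier (grp Y (lam B z))" "be \<in> bset B e" "b = lact B z g (cdn B e be)"
    "state_eq Y B dag (transport1 X Y B (Gen f) (z, qw, b)) (cross_edge B z qw e (g, be))"
proof -
  have zV: "z \<in> Vb B" and W: "gwalk Y dag qw (lam B z)" and b: "b \<in> bset B z" and fx: "edn X f = rho B z"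
    using v f(3) by auto
  obtain e g be where E: "e \<in> bcar B" "e \<notin> Vb B" "rho B e = f" "bdn B e = z"
    "g \<in> carrier (grp Y (lam B z))" "be \<in> bset B e" "b = lact B z g (cdn B e be)"
    using fibre_decomp_obtain[OF zV f(1,2) fx b] by metis
  then show ?thesis using that transport1_edge[OF zV f(2) fx E(1,3,4,5,6) W] by simp
qed

lemma transport1_over:
  assumes v: "state_over Y B dag x \<sigma>" and w: "gwalk X x [l] x'"
  shows "state_over Y B dag x' (transport1 X Y B l \<sigma>)"
proof -
  obtain z qw b where s: "\<sigma> = (z, qw, b)" by (cases \<sigma>) auto
  have zV: "z \<in> Vb B" and W: "gwalk Y dag qw (lam B z)" and b: "b \<in> bset B z"
    using v s by auto
  show ?thesis
  proof (cases l)
    case (Elt u g)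
    then show ?thesis using s v w ract_closed[OF _ _ b, of g] zV by (auto simp: Vb_iff)
  next
    case (Gen f)
    then have f: "f \<in> gcar X" "edn X f = x" "x' = eup X f" using w by auto
    show ?thesis
    proof (cases "f \<in> Vx X")
      case True
      then show ?thesis using s Gen v f Vx_eup[OF X True] by (simp add: Vx_iff)
    next
      case False
      obtain e g be where E: "e \<in> bcar B" "rho B e = f" "bdn B e = z"
        "g \<in> carrier (grp Y (lam B z))" "be \<in> bset B e"
        and Yq: "state_eq Y B dag (transport1 X Y B (Gen f) (z, qw, b)) (cross_edge B z qw e (g, be))"
        using transport1_edge_obtain[OF v[unfolded s] f(1) False f(2)] by metis
      have "state_over Y B dag x' (cross_edge B z qw e (g, be))"
        using cross_edge_over[OF E(1,3,4,5) W] E(2) f(3) by simp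
      then show ?thesis using state_eq_over[OF equivclp_sym[OF Yq]] s Gen by simp
    qed
  qed
qed

lemma transport_over:
  assumes "state_over Y B dag x \<sigma>" "gwalk X x a t"
  shows "state_over Y B dag t (transport X Y B a \<sigma>)"
  using assms
proof (induction a arbitrary: \<sigma> x)
  case (Cons l a)
  then obtain x' where "gwalk X x [l] x'" "gwalk X x' a t" using gwalk_Cons_split[OF X] by blast
  then show ?case using Cons.IH[OF transport1_over[OF Cons.prems(1)]] by simp
qed simp

lemma transport1_reverse_edge:
  assumes e: "e \<in> bcar B" "e \<notin> Vb B" and be: "be \<in> bset B e" and W: "gwalk Y dag qw (lam B (bdn B e))"
  shows "state_eq Y B dag (transport1 X Y B (Gen (rho B (bbar B e))) (bup B e, qw @ [Gen (lam B e)], cup B e be))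
     (bdn B e, qw, cdn B e be)"
proof -
  define x where "x = lam B e"
  define E where "E = bbar B e"
  define one where "one = \<one>\<^bsub>grp Y (eup Y x)\<^esub>"
  have x: "x \<in> gcar Y" "edn Y x = lam B (bdn B e)" using lam_mor(1,2)[OF e(1)] x_def by auto
  have E: "E \<in> bcar B" "E \<notin> Vb B" using edge_bbar[OF e] E_def by auto
  have dE: "bdn B E = bup B e" and uE: "bup B E = bdn B e" and lE: "lam B E = ebar Y x"
    using bgraph(3)[OF e(1)] lam_mor(3)[OF e(1)] by (simp_all add: E_def bup_def x_def)
  have c: "cbar B e be \<in> bset B E" using cmaps(2)[OF e(1) be] E_def by simp
  have cE: "cdn B E (cbar B e be) = cup B e be" "cup B E (cbar B e be) = cdn B e be"
    unfolding cup_def E_def using bgraph(3)[OF e(1)] cmaps(3)[OF e(1) be] by simp_all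
  have uV: "bup B e \<in> Vb B" "lam B (bup B e) = eup Y x" using bup_Vb[OF e(1)] lam_bup[OF e(1)] x_def by auto
  have exV: "eup Y x \<in> Vx Y" using eup_Vx[OF Y x(1)] .
  have one: "one \<in> carrier (grp Y (eup Y x))"
    using gog_Vx_group[OF Y exV] by (simp add: one_def group.is_monoid monoid.one_closed)
  have W0: "gwalk Y dag (qw @ [Gen x]) (lam B (bup B e))" using gwalk_append_iff[OF Y W] x exV uV by simp
  have T: "state_eq Y B dag
      (transport1 X Y B (Gen (rho B E)) (bup B e, qw @ [Gen x], lact B (bup B e) one (cdn B E (cbar B e be))))
      (cross_edge B (bup B e) (qw @ [Gen x]) E (one, cbar B e be))"
    by (rule transport1_edge[OF uV(1) rho_edge[OF E] _ E(1) refl dE _ c W0])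
       (use rho_mor(2)[OF E(1)] dE one uV(2) in simp_all)
  have "lact B (bup B e) one (cdn B E (cbar B e be)) = cup B e be"
    using lact_one[OF _ cup_bset[OF e(1) be]] uV cE by (simp add: one_def Vb_iff)
  moreover have "cross_edge B (bup B e) (qw @ [Gen x]) E (one, cbar B e be)
      = (bdn B e, (qw @ [Gen x]) @ [Elt (eup Y x) one, Gen (ebar Y x)], cdn B e be)"
    unfolding cross_edge_def using uE uV(2) lE cE by simp
  ultimately have "state_eq Y B dag (transport1 X Y B (Gen (rho B E)) (bup B e, qw @ [Gen x], cup B e be))
     (bdn B e, (qw @ [Gen x]) @ [Elt (eup Y x) one, Gen (ebar Y x)], cdn B e be)"
    using T by (simp only:)
  also have "state_eq Y B dag \<dots> (bdn B e, qw, cdn B e be)"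
  proof -
    have bt: "equivclp (gstep Y dag) (qw @ [Gen x, Elt (eup Y x) one, Gen (ebar Y x)]) qw"
      using gequiv_backtrack[OF Y x(1)] W x(2) by (simp add: one_def)
    then have "gwalk Y dag (qw @ [Gen x, Elt (eup Y x) one, Gen (ebar Y x)]) (lam B (bdn B e))"
      using gequiv_gwalk_iff[OF Y] W by blast
    from state_eq_gequiv[OF bdn_Vb[OF e(1)] this bt cmaps(1)[OF e(1) be]] show ?thesis by simp
  qed
  finally show ?thesis by (simp add: x_def E_def)
qed

end

context fibrant_gbs
begin

lemma transport1_edge_state_step:
  assumes st: "state_step Y B dag \<sigma> \<tau>" and f: "f \<in> gcar X" "f \<notin> Vx X" "edn X f = rho B (fst \<sigma>)"
  shows "state_eq Y B dag (transport1 X Y B (Gen f) \<sigma>) (transport1 X Y B (Gen f) \<tau>)"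
proof -
  obtain z qw b qw' b' where s: "\<sigma> = (z, qw, b)" "\<tau> = (z, qw', b')" and zV: "z \<in> Vb B"
    and W: "gwalk Y dag qw (lam B z)" and W': "gwalk Y dag qw' (lam B z)"
    and b: "b \<in> bset B z" and b': "b' \<in> bset B z"
    and R: "(gstep Y dag qw qw' \<and> b = b') \<or>
      (\<exists>h\<in>carrier (grp Y (lam B z)). qw = qw' @ [Elt (lam B z) h] \<and> b' = lact B z h b)"
    using st unfolding state_step_def by blast
  have fz: "edn X f = rho B z" using f(3) s by simp
  have v: "state_over Y B dag (rho B z) (z, qw, b)" using zV W b by simp
  obtain e g be where E: "e \<in> bcar B" "rho B e = f" "bdn B e = z"
    "g \<in> carrier (grp Y (lam B z))" "be \<in> bset B e" "b = lact B z g (cdn B e be)"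
    and Yq: "state_eq Y B dag (transport1 X Y B (Gen f) (z, qw, b)) (cross_edge B z qw e (g, be))"
    using transport1_edge_obtain[OF v f(1,2) fz] by metis
  from R obtain g' where g': "g' \<in> carrier (grp Y (lam B z))" "b' = lact B z g' (cdn B e be)"
    and Yc: "state_eq Y B dag (cross_edge B z qw e (g, be)) (cross_edge B z qw' e (g', be))"
  proof
    assume "gstep Y dag qw qw' \<and> b = b'"
    then show ?thesis using that E(4,6) cross_edge_gstep[OF E(1,3) W _ E(4,5)] by simp
  next
    assume "\<exists>h\<in>carrier (grp Y (lam B z)). qw = qw' @ [Elt (lam B z) h] \<and> b' = lact B z h b"
    then obtain h where h: "h \<in> carrier (grp Y (lam B z))" "qw = qw' @ [Elt (lam B z) h]" "b' = lact B z h b"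
      by blast
    have "h \<otimes>\<^bsub>grp Y (lam B z)\<^esub> g \<in> carrier (grp Y (lam B z))"
      using Vb_lam_group[OF zV] h(1) E(4) by (simp add: group.is_monoid monoid.m_closed)
    moreover have "b' = lact B z (h \<otimes>\<^bsub>grp Y (lam B z)\<^esub> g) (cdn B e be)"
      using h(3) E(6) lact_mult[OF _ h(1) E(4) cdn_bset[OF E(1,3,5)]] zV by (simp add: Vb_iff)
    ultimately show ?thesis using that cross_edge_absorb[OF E(1,3) W' h(1) E(4,5)] h(2) by simp
  qed
  have "state_eq Y B dag (transport1 X Y B (Gen f) (z, qw', b')) (cross_edge B z qw' e (g', be))"
    using transport1_edge[OF zV f(2) fz E(1,2,3) g'(1) E(5) W'] g'(2) by simp
  then show ?thesis using equivclp_trans[OF Yq equivclp_trans[OF Yc equivclp_sym]] s by blast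
qed

lemma transport1_state_step:
  assumes st: "state_step Y B dag \<sigma> \<tau>" and w: "gwalk X (rho B (fst \<sigma>)) [l] x'"
  shows "state_eq Y B dag (transport1 X Y B l \<sigma>) (transport1 X Y B l \<tau>)"
proof (cases l)
  case (Elt u g)
  obtain z qw b qw' b' where s: "\<sigma> = (z, qw, b)" "\<tau> = (z, qw', b')" and zV: "z \<in> Vb B"
    and W: "gwalk Y dag qw (lam B z)" and W': "gwalk Y dag qw' (lam B z)" and b: "b \<in> bset B z"
    and R: "(gstep Y dag qw qw' \<and> b = b') \<or>
      (\<exists>h\<in>carrier (grp Y (lam B z)). qw = qw' @ [Elt (lam B z) h] \<and> b' = lact B z h b)"
    using st unfolding state_step_def by blast
  have zc: "z \<in> bcar B" using zV by (simp add: Vb_iff)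
  have g: "g \<in> carrier (grp X (rho B z))" using w Elt s by auto
  from R show ?thesis
  proof
    assume "gstep Y dag qw qw' \<and> b = b'"
    then show ?thesis using state_eq_gstep[OF zV W _ ract_closed[OF zc g b]] s Elt by simp
  next
    assume "\<exists>h\<in>carrier (grp Y (lam B z)). qw = qw' @ [Elt (lam B z) h] \<and> b' = lact B z h b"
    then obtain h where h: "h \<in> carrier (grp Y (lam B z))" "qw = qw' @ [Elt (lam B z) h]" "b' = lact B z h b"
      by blast
    then show ?thesis
      using state_eq_absorb[OF zV W' h(1) ract_closed[OF zc g b]] s Elt lact_ract_comm[OF zc h(1) g b] by simp
  qed
next
  case (Gen f)
  have f: "f \<in> gcar X" "edn X f = rho B (fst \<sigma>)" using w Gen by auto
  show ?thesis
  proof (cases "f \<in> Vx X")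
    case True
    then show ?thesis using st Gen by (cases \<sigma>, cases \<tau>) (auto intro: r_into_equivclp)
  next
    case False
    then show ?thesis using transport1_edge_state_step[OF st f(1) False f(2)] Gen by simp
  qed
qed

lemma transport1_state_eq:
  assumes st: "state_eq Y B dag \<sigma> \<tau>" and w: "gwalk X (rho B (fst \<sigma>)) [l] x'"
  shows "state_eq Y B dag (transport1 X Y B l \<sigma>) (transport1 X Y B l \<tau>)"
  using st w
  by (rule equivclp_map_on[where I = "\<lambda>\<sigma>. gwalk X (rho B (fst \<sigma>)) [l] x'"])
     (simp_all add: state_step_fst transport1_state_step)

lemma transport_state_eq:
  assumes "state_eq Y B dag \<sigma> \<tau>" "state_over Y B dag x \<sigma>" "gwalk X x a t"
  shows "state_eq Y B dag (transport X Y B a \<sigma>) (transport X Y B a \<tau>)"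
  using assms
proof (induction a arbitrary: \<sigma> \<tau> x)
  case (Cons l a)
  obtain x' where w: "gwalk X x [l] x'" "gwalk X x' a t" using gwalk_Cons_split[OF X Cons.prems(3)] by blast
  have "state_eq Y B dag (transport1 X Y B l \<sigma>) (transport1 X Y B l \<tau>)"
    using transport1_state_eq[OF Cons.prems(1)] w(1) state_over_rho[OF Cons.prems(2)] by simp
  then show ?case using Cons.IH[OF _ transport1_over[OF Cons.prems(2) w(1)] w(2)] by simp
qed simp

lemma transport1_edge_inv:
  assumes v: "state_over Y B dag m \<sigma>" and x: "x \<in> gcar X" and mx: "edn X x = m"
  shows "state_eq Y B dag (transport1 X Y B (Gen (ebar X x)) (transport1 X Y B (Gen x) \<sigma>)) \<sigma>"
proof -
  obtain z qw b where s: "\<sigma> = (z, qw, b)" by (cases \<sigma>) auto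
  have zV: "z \<in> Vb B" and W: "gwalk Y dag qw (lam B z)" using v s by auto
  show ?thesis
  proof (cases "x \<in> Vx X")
    case True
    then show ?thesis using s Vx_ebar[OF X True] by simp
  next
    case False
    obtain e g be where E: "e \<in> bcar B" "e \<notin> Vb B" "rho B e = x" "bdn B e = z"
        "g \<in> carrier (grp Y (lam B z))" "be \<in> bset B e" "b = lact B z g (cdn B e be)"
        and Yq: "state_eq Y B dag (transport1 X Y B (Gen x) (z, qw, b)) (cross_edge B z qw e (g, be))"
      using transport1_edge_obtain[OF v[unfolded s] x False mx] by metis
    have "rho B (fst (transport1 X Y B (Gen x) (z, qw, b))) = eup X x"
      using state_eq_fst[OF Yq] rho_bup[OF E(1)] E(3) by (simp add: cross_edge_def)
    then have wx: "gwalk X (rho B (fst (transport1 X Y B (Gen x) (z, qw, b)))) [Gen (ebar X x)] (edn X x)"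
      using gog_graph(1)[OF X x] eup_ebar[OF X x] edn_Vx[OF X x] by (simp add: edn_ebar)
    have W0: "gwalk Y dag (qw @ [Elt (lam B z) g]) (lam B (bdn B e))"
      using gwalk_append_iff[OF Y W] Vb_lam[OF zV] E(5,4) by simp
    have "state_eq Y B dag (transport1 X Y B (Gen (ebar X x)) (transport1 X Y B (Gen x) (z, qw, b)))
        (transport1 X Y B (Gen (ebar X x)) (cross_edge B z qw e (g, be)))"
      by (rule transport1_state_eq[OF Yq wx])
    also have "state_eq Y B dag \<dots> (z, qw @ [Elt (lam B z) g], cdn B e be)"
      using transport1_reverse_edge[OF E(1,2,6) W0] rho_mor(3)[OF E(1)] E(3,4)
      by (simp add: cross_edge_def)
    also have "state_eq Y B dag \<dots> (z, qw, b)"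
      using state_eq_absorb[OF zV W E(5) cdn_bset[OF E(1,4,6)]] E(7) by simp
    finally show ?thesis using s by simp
  qed
qed

lemma transport1_edge_conj:
  assumes v: "state_over Y B dag m \<sigma>" and x: "x \<in> gcar X" and mx: "edn X x = m"
    and g: "g \<in> carrier (grp X x)"
  shows "state_eq Y B dag (transport1 X Y B (Gen x) (transport1 X Y B (Elt (edn X x) (hdn X x g)) \<sigma>))
     (transport1 X Y B (Elt (eup X x) (hdn X (ebar X x) (hbar X x g))) (transport1 X Y B (Gen x) \<sigma>))"
proof -
  obtain z qw b where s: "\<sigma> = (z, qw, b)" by (cases \<sigma>) auto
  have zV: "z \<in> Vb B" and rz: "rho B z = m" and W: "gwalk Y dag qw (lam B z)" and b: "b \<in> bset B z"
    using v s by auto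
  have zc: "z \<in> bcar B" using zV by (simp add: Vb_iff)
  show ?thesis
  proof (cases "x \<in> Vx X")
    case True
    then show ?thesis
      using s gog_Vx_hom[OF X True g] Vx_ebar[OF X True] Vx_eup[OF X True] by simp
  next
    case False
    obtain e g0 be where E: "e \<in> bcar B" "rho B e = x" "bdn B e = z"
        "g0 \<in> carrier (grp Y (lam B z))" "be \<in> bset B e" "b = lact B z g0 (cdn B e be)"
        and Yq: "state_eq Y B dag (transport1 X Y B (Gen x) (z, qw, b)) (cross_edge B z qw e (g0, be))"
      using transport1_edge_obtain[OF v[unfolded s] x False mx] by metis
    define gp where "gp = hdn X (ebar X x) (hbar X x g)"
    have ge: "g \<in> carrier (grp X (rho B e))" using g E(2) by simp
    have gm: "hdn X x g \<in> carrier (grp X (rho B z))" using hdn_carrier[OF X x g] mx rz by simp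
    have "ract B z b (hdn X x g) = lact B z g0 (cdn B e (ract B e be g))"
      using E(6) lact_ract_comm[OF zc E(4) gm cdn_bset[OF E(1,3,5)]] cmaps_ract(1)[OF E(1,5) ge] E(2,3)
      by simp
    then have "state_eq Y B dag (transport1 X Y B (Gen x) (transport1 X Y B (Elt (edn X x) (hdn X x g)) (z, qw, b)))
        (cross_edge B z qw e (g0, ract B e be g))"
      using transport1_edge[OF zV False _ E(1,2,3,4) ract_closed[OF E(1) ge E(5)] W] mx rz by simp
    also have "cross_edge B z qw e (g0, ract B e be g) = transport1 X Y B (Elt (eup X x) gp) (cross_edge B z qw e (g0, be))"
      unfolding cross_edge_def gp_def using cup_ract[OF E(1,5) ge] E(2) by simp
    also have "state_eq Y B dag \<dots> (transport1 X Y B (Elt (eup X x) gp) (transport1 X Y B (Gen x) (z, qw, b)))"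
    proof -
      have "rho B (fst (transport1 X Y B (Gen x) (z, qw, b))) = eup X x"
        using state_eq_fst[OF Yq] rho_bup[OF E(1)] E(2) by (simp add: cross_edge_def)
      then have "gwalk X (rho B (fst (transport1 X Y B (Gen x) (z, qw, b)))) [Elt (eup X x) gp] (eup X x)"
        using hdn_hbar_carrier[OF X x g] eup_Vx[OF X x] by (simp add: gp_def)
      then show ?thesis using equivclp_sym[OF transport1_state_eq[OF Yq]] by blast
    qed
    finally show ?thesis using s by (simp add: gp_def)
  qed
qed

lemma transport_brel:
  assumes br: "brel X l r" and v: "state_over Y B dag m \<sigma>" and W: "gwalk X m l k"
  shows "state_eq Y B dag (transport X Y B l \<sigma>) (transport X Y B r \<sigma>)"
proof -
  obtain z qw b where s: "\<sigma> = (z, qw, b)" by (cases \<sigma>) auto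
  have zc: "z \<in> bcar B" and rz: "rho B z = m" and b: "b \<in> bset B z" using v s by (auto simp: Vb_iff)
  from br show ?thesis
  proof (cases rule: brel_cases)
    case (mult u g h)
    then show ?thesis using W s rz ract_mult[OF zc _ _ b, of g h] by auto
  next
    case (one u)
    then show ?thesis using W s rz ract_one[OF zc b] by auto
  next
    case (vertex u)
    then show ?thesis using s by simp
  next
    case (edge_inv x)
    then show ?thesis using transport1_edge_inv[OF v] W by auto
  next
    case (edge_conj x g)
    then show ?thesis using transport1_edge_conj[OF v] W by auto
  qed
qed

lemma transport_gstep:
  assumes st: "gstep X v a a'" and sv: "state_over Y B dag v \<sigma>"
  shows "state_eq Y B dag (transport X Y B a \<sigma>) (transport X Y B a' \<sigma>)"
proof -
  have key: "state_eq Y B dag (transport X Y B (u @ l @ w) \<sigma>) (transport X Y B (u @ r @ w) \<sigma>)"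
    if br: "brel X l r" and wl: "gwalk X v (u @ l @ w) t" for u l r w t
  proof -
    obtain m k where 1: "gwalk X v u m" "gwalk X m l k" "gwalk X k w t"
      using wl unfolding gwalk_append3[OF X] by blast
    have vu: "state_over Y B dag m (transport X Y B u \<sigma>)" by (rule transport_over[OF sv 1(1)])
    have "state_eq Y B dag (transport X Y B l (transport X Y B u \<sigma>)) (transport X Y B r (transport X Y B u \<sigma>))"
      by (rule transport_brel[OF br vu 1(2)])
    from transport_state_eq[OF this transport_over[OF vu 1(2)] 1(3)] show ?thesis
      by (simp add: transport_append)
  qed
  obtain u l r w t t' where br: "brel X l r" and ta: "gwalk X v a t" and ta': "gwalk X v a' t'" and
    e: "(a = u @ l @ w \<and> a' = u @ r @ w) \<or> (a = u @ r @ w \<and> a' = u @ l @ w)"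
    using st unfolding gstep_def by blast
  from e show ?thesis
    using key[OF br, of u w t] key[OF br, of u w t'] ta ta' by (auto intro: equivclp_sym)
qed

lemma transport_gequiv:
  assumes "equivclp (gstep X v) a a'" and "state_over Y B dag v \<sigma>"
  shows "state_eq Y B dag (transport X Y B a \<sigma>) (transport X Y B a' \<sigma>)"
  using assms(1)
  by (rule equivclp_map_on[where I = "\<lambda>_. True", OF _ TrueI]) (simp_all add: transport_gstep[OF _ assms(2)])

lemma transport1_inv_letter:
  assumes v: "state_over Y B dag x \<sigma>" and w: "gwalk X x [l] y"
  shows "state_eq Y B dag (transport1 X Y B (inv_letter X l) (transport1 X Y B l \<sigma>)) \<sigma>"
proof (cases l)
  case (Gen f)
  then show ?thesis using transport1_edge_inv[OF v] w by (auto simp: inv_letter_def)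
next
  case (Elt u g)
  obtain z qw b where s: "\<sigma> = (z, qw, b)" by (cases \<sigma>) auto
  have zc: "z \<in> bcar B" and rz: "rho B z = x" and b: "b \<in> bset B z" using v s by (auto simp: Vb_iff)
  have u: "u \<in> Vx X" "u = x" "g \<in> carrier (grp X x)" using w Elt by auto
  have grp: "group (grp X (rho B z))" using gog_Vx_group[OF X] u(1,2) rz by simp
  have gz: "g \<in> carrier (grp X (rho B z))" using u(3) rz by simp
  have "ract B z (ract B z b g) (inv\<^bsub>grp X (rho B z)\<^esub> g) = ract B z b (g \<otimes>\<^bsub>grp X (rho B z)\<^esub> inv\<^bsub>grp X (rho B z)\<^esub> g)"
    using ract_mult[OF zc gz group.inv_closed[OF grp gz] b] by simp
  also have "\<dots> = b" using ract_one[OF zc b] grp gz by (simp add: group.r_inv)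
  finally show ?thesis using s Elt u rz by (simp add: inv_letter_def)
qed

lemma transport_inv_word:
  assumes v: "state_over Y B dag x \<sigma>" and w: "gwalk X x a y"
  shows "state_eq Y B dag (transport X Y B (inv_word X a) (transport X Y B a \<sigma>)) \<sigma>"
  using v w
proof (induction a arbitrary: \<sigma> x)
  case (Cons l a)
  obtain x' where w: "gwalk X x [l] x'" "gwalk X x' a y" using gwalk_Cons_split[OF X Cons.prems(2)] by blast
  define \<sigma>1 where "\<sigma>1 = transport1 X Y B l \<sigma>"
  have v1: "state_over Y B dag x' \<sigma>1" unfolding \<sigma>1_def by (rule transport1_over[OF Cons.prems(1) w(1)])
  have vA: "state_over Y B dag x' (transport X Y B (inv_word X a) (transport X Y B a \<sigma>1))"
    using transport_over[OF transport_over[OF v1 w(2)] inv_word_gwalk[OF X w(2)]] .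
  have "state_eq Y B dag (transport1 X Y B (inv_letter X l) (transport X Y B (inv_word X a) (transport X Y B a \<sigma>1)))
      (transport1 X Y B (inv_letter X l) \<sigma>1)"
    using transport1_state_eq[OF Cons.IH[OF v1 w(2)]] inv_letter_gwalk[OF X w(1)] state_over_rho[OF vA] by blast
  also have "state_eq Y B dag \<dots> \<sigma>" unfolding \<sigma>1_def by (rule transport1_inv_letter[OF Cons.prems(1) w(1)])
  finally show ?case unfolding \<sigma>1_def by (simp add: transport_append)
qed simp

lemma transport_inv_word':
  assumes "state_over Y B dag y \<tau>" and w: "gwalk X x a y"
  shows "state_eq Y B dag (transport X Y B a (transport X Y B (inv_word X a) \<tau>)) \<tau>"
  using transport_inv_word[OF assms(1) inv_word_gwalk[OF X w]] inv_word_inv_word[OF X w] by simp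

end

fun state_class :: "('y, 'gy) gog \<Rightarrow> ('x, 'gx) gog \<Rightarrow> ('b, 'c, 'y, 'x, 'gy, 'gx) gbs \<Rightarrow> 'y \<Rightarrow> 'x
   \<Rightarrow> 'b \<times> ('y, 'gy) letter list \<times> 'c \<Rightarrow> ('x, 'gx) gmor
   \<Rightarrow> 'b \<times> ('y, 'gy, 'c, 'x, 'gx) triple set" where
  "state_class Y X B dag st (z, qw, b) p = (z, tcls Y X B dag st z ((dag, gcls Y dag qw), b, p))"

definition endpoint_set :: "('y, 'gy) gog \<Rightarrow> ('x, 'gx) gog \<Rightarrow> ('b, 'c, 'y, 'x, 'gy, 'gx) gbs \<Rightarrow> 'y \<Rightarrow> 'b
   \<Rightarrow> ('y, 'gy, 'c, 'x, 'gx) triple \<Rightarrow> ('b \<times> ('y, 'gy) letter list \<times> 'c) set" where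
  "endpoint_set Y X B dag z t = {\<tau>. \<exists>qw\<in>snd (fst t). \<exists>a\<in>snd (snd (snd t)).
      state_eq Y B dag (transport X Y B a (z, qw, fst (snd t))) \<tau>}"

text \<open>The class of the state obtained by transporting a representative of \<open>s \<in> S\<close> along its
  path to \<open>*\<close>; it turns out to be a complete invariant of \<open>\<sim>\<close>.\<close>

definition endpoint_class :: "('y, 'gy) gog \<Rightarrow> ('x, 'gx) gog \<Rightarrow> ('b, 'c, 'y, 'x, 'gy, 'gx) gbs \<Rightarrow> 'y
   \<Rightarrow> 'b \<times> ('y, 'gy, 'c, 'x, 'gx) triple set \<Rightarrow> ('b \<times> ('y, 'gy) letter list \<times> 'c) set" where
  "endpoint_class Y X B dag s = \<Union> (endpoint_set Y X B dag (fst s) ` snd s)"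

lemma tcls_equivclp: "tcls Y X B dag st z s = Collect (equivclp (tstep Y X B dag st z) s)"
  by (simp add: tcls_def rtranclp_symmetric_eq_equivclp)

lemma tcls_self: "s \<in> tcls Y X B dag st z s"
  by (simp add: tcls_def)

lemma tcls_tstep: "tstep Y X B dag st z s t \<Longrightarrow> tcls Y X B dag st z s = tcls Y X B dag st z t"
  by (simp add: tcls_equivclp equivclp_class_eq r_into_equivclp)

lemma tdomD:
  assumes "tdom Y X B dag st z t"
  shows "z \<in> Vb B" "fst t \<in> pi1 Y dag (lam B z)" "fst (snd t) \<in> bset B z" "snd (snd t) \<in> pi1 X (rho B z) st"
  using assms unfolding tdom_def by auto

context fibrant_gbs
begin

lemma tdom_state:
  "state_over Y B dag x (z, qw, b) \<Longrightarrow> p \<in> pi1 X x st \<Longrightarrow> tdom Y X B dag st z ((dag, gcls Y dag qw), b, p)"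
  unfolding tdom_def by (auto intro: pi1_I)

lemma state_class_state_step:
  assumes st: "state_step Y B dag \<sigma> \<tau>" and p: "p \<in> pi1 X (rho B (fst \<sigma>)) stx"
  shows "state_class Y X B dag stx \<sigma> p = state_class Y X B dag stx \<tau> p"
proof -
  obtain z qw b qw' b' where s: "\<sigma> = (z, qw, b)" "\<tau> = (z, qw', b')" and zV: "z \<in> Vb B"
    and W: "gwalk Y dag qw (lam B z)" and W': "gwalk Y dag qw' (lam B z)"
    and b: "b \<in> bset B z" and b': "b' \<in> bset B z"
    and R: "(gstep Y dag qw qw' \<and> b = b') \<or>
      (\<exists>h\<in>carrier (grp Y (lam B z)). qw = qw' @ [Elt (lam B z) h] \<and> b' = lact B z h b)"
    using st unfolding state_step_def by blast
  from R show ?thesis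
  proof
    assume "gstep Y dag qw qw' \<and> b = b'"
    then show ?thesis using s gcls_gstep[of Y dag qw qw'] by simp
  next
    assume "\<exists>h\<in>carrier (grp Y (lam B z)). qw = qw' @ [Elt (lam B z) h] \<and> b' = lact B z h b"
    then obtain h where h: "h \<in> carrier (grp Y (lam B z))" "qw = qw' @ [Elt (lam B z) h]" "b' = lact B z h b"
      by blast
    have gc: "gcomp Y (dag, gcls Y dag qw') (gel Y (lam B z) h) = (dag, gcls Y dag qw)"
      unfolding gel_def using gcomp_gcls[OF Y W'] Vb_lam[OF zV] h by simp
    have "tstep Y X B dag stx z ((dag, gcls Y dag qw), b, p) ((dag, gcls Y dag qw'), b', p)"
      unfolding tstep_def
    proof (intro conjI disjI1)
      show "tdom Y X B dag stx z ((dag, gcls Y dag qw), b, p)"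
        "tdom Y X B dag stx z ((dag, gcls Y dag qw'), b', p)"
        using tdom_state zV W W' b b' p s by simp_all
      show "\<exists>h\<in>carrier (grp Y (lam B z)). fst ((dag, gcls Y dag qw), b, p)
          = gcomp Y (fst ((dag, gcls Y dag qw'), b', p)) (gel Y (lam B z) h) \<and>
          fst (snd ((dag, gcls Y dag qw'), b', p)) = lact B z h (fst (snd ((dag, gcls Y dag qw), b, p))) \<and>
          snd (snd ((dag, gcls Y dag qw'), b', p)) = snd (snd ((dag, gcls Y dag qw), b, p))"
        using gc h by (intro bexI[OF _ h(1)]) simp
    qed
    then show ?thesis using s tcls_tstep by simp
  qed
qed

lemma state_class_state_eq:
  assumes st: "state_eq Y B dag \<sigma> \<tau>" and p: "p \<in> pi1 X (rho B (fst \<sigma>)) stx"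
  shows "state_class Y X B dag stx \<sigma> p = state_class Y X B dag stx \<tau> p"
  using st p
  by (rule equivclp_invariant_on[where I = "\<lambda>\<sigma>. p \<in> pi1 X (rho B (fst \<sigma>)) stx"])
     (simp_all add: state_step_fst state_class_state_step)

lemma endpoint_set_repr:
  assumes td: "tdom Y X B dag stx z t" and qw: "qw \<in> snd (fst t)" and a: "a \<in> snd (snd (snd t))"
  shows "endpoint_set Y X B dag z t = Collect (state_eq Y B dag (transport X Y B a (z, qw, fst (snd t))))"
proof -
  note T = tdomD[OF td]
  have key: "state_eq Y B dag (transport X Y B a' (z, qw', fst (snd t))) (transport X Y B a (z, qw, fst (snd t)))"
    if "qw' \<in> snd (fst t)" "a' \<in> snd (snd (snd t))" for qw' a'
  proof -
    have pq': "gwalk Y dag qw' (lam B z)" "fst t = (dag, gcls Y dag qw')"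
      using pi1_memD[OF Y T(2) that(1)] by auto
    have pa': "gwalk X (rho B z) a' stx" "snd (snd t) = (rho B z, gcls X (rho B z) a')"
      using pi1_memD[OF X T(4) that(2)] by auto
    have e1: "equivclp (gstep Y dag) qw' qw" using qw pq'(2) by (simp add: gcls_equivclp)
    have e2: "equivclp (gstep X (rho B z)) a' a" using a pa'(2) by (simp add: gcls_equivclp)
    have v: "state_over Y B dag (rho B z) (z, qw', fst (snd t))" using T(1,3) pq'(1) by simp
    have "state_eq Y B dag (transport X Y B a' (z, qw', fst (snd t))) (transport X Y B a' (z, qw, fst (snd t)))"
      by (rule transport_state_eq[OF state_eq_gequiv[OF T(1) pq'(1) e1 T(3)] v pa'(1)])
    also have "state_eq Y B dag \<dots> (transport X Y B a (z, qw, fst (snd t)))"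
      by (rule transport_gequiv[OF e2 state_eq_over[OF state_eq_gequiv[OF T(1) pq'(1) e1 T(3)] v]])
    finally show ?thesis .
  qed
  show ?thesis
  proof (rule Set.set_eqI, rule iffI)
    fix \<tau> assume "\<tau> \<in> endpoint_set Y X B dag z t"
    then obtain qw' a' where "qw' \<in> snd (fst t)" "a' \<in> snd (snd (snd t))"
      "state_eq Y B dag (transport X Y B a' (z, qw', fst (snd t))) \<tau>"
      unfolding endpoint_set_def by blast
    then show "\<tau> \<in> Collect (state_eq Y B dag (transport X Y B a (z, qw, fst (snd t))))"
      using equivclp_trans[OF equivclp_sym[OF key]] by simp
  qed (use qw a in \<open>auto simp: endpoint_set_def\<close>)
qed

end

context fibrant_gbs
begin

lemma endpoint_set_tstep:
  assumes st: "tstep Y X B dag stx z t1 t2"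
  shows "endpoint_set Y X B dag z t1 = endpoint_set Y X B dag z t2"
proof -
  have td1: "tdom Y X B dag stx z t1" and td2: "tdom Y X B dag stx z t2" using st unfolding tstep_def by auto
  note T1 = tdomD[OF td1] and T2 = tdomD[OF td2]
  have zc: "z \<in> bcar B" using T1(1) by (simp add: Vb_iff)
  from st consider
      (left) h where "h \<in> carrier (grp Y (lam B z))" "fst t1 = gcomp Y (fst t2) (gel Y (lam B z) h)"
        "fst (snd t2) = lact B z h (fst (snd t1))" "snd (snd t2) = snd (snd t1)"
    | (right) g where "g \<in> carrier (grp X (rho B z))" "fst t2 = fst t1"
        "fst (snd t1) = ract B z (fst (snd t2)) g" "snd (snd t2) = gcomp X (gel X (rho B z) g) (snd (snd t1))"
    unfolding tstep_def by blast
  then show ?thesis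
  proof cases
    case left
    obtain qw where qw: "qw \<in> snd (fst t2)" "gwalk Y dag qw (lam B z)" "fst t2 = (dag, gcls Y dag qw)"
      using pi1_repr[OF T2(2)] by blast
    obtain a where a: "a \<in> snd (snd (snd t2))" "gwalk X (rho B z) a stx"
      using pi1_repr[OF T2(4)] by blast
    have wh: "gwalk Y (lam B z) [Elt (lam B z) h] (lam B z)" using Vb_lam[OF T1(1)] left(1) by simp
    have "fst t1 = (dag, gcls Y dag (qw @ [Elt (lam B z) h]))"
      using left(2) qw(3) gcomp_gcls[OF Y qw(2) wh] unfolding gel_def by simp
    then have qw1: "qw @ [Elt (lam B z) h] \<in> snd (fst t1)" using gcls_self by simp
    have v: "state_over Y B dag (rho B z) (z, qw @ [Elt (lam B z) h], fst (snd t1))"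
      using T1(1,3) gwalk_append_iff[OF Y qw(2)] wh by simp
    have "state_eq Y B dag (z, qw @ [Elt (lam B z) h], fst (snd t1)) (z, qw, fst (snd t2))"
      using state_eq_absorb[OF T1(1) qw(2) left(1) T1(3)] left(3) by simp
    from transport_state_eq[OF this v a(2)] show ?thesis
      using endpoint_set_repr[OF td1 qw1] endpoint_set_repr[OF td2 qw(1) a(1)] a(1) left(4)
      by (simp add: equivclp_class_eq)
  next
    case right
    obtain a where a: "a \<in> snd (snd (snd t1))" "gwalk X (rho B z) a stx"
        "snd (snd t1) = (rho B z, gcls X (rho B z) a)"
      using pi1_repr[OF T1(4)] by blast
    obtain qw where qw: "qw \<in> snd (fst t1)" using pi1_repr[OF T1(2)] by blast
    have wg: "gwalk X (rho B z) [Elt (rho B z) g] (rho B z)" using Vb_rho[OF T1(1)] right(1) by simp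
    have "snd (snd t2) = (rho B z, gcls X (rho B z) (Elt (rho B z) g # a))"
      using right(4) a(3) gcomp_gcls[OF X wg a(2)] unfolding gel_def by simp
    then have "Elt (rho B z) g # a \<in> snd (snd (snd t2))" using gcls_self by simp
    then show ?thesis
      using endpoint_set_repr[OF td1 qw a(1)] endpoint_set_repr[OF td2 _ _] qw right(2,3) by simp
  qed
qed

lemma endpoint_class_tcls:
  assumes "tdom Y X B dag stx z t0"
  shows "endpoint_class Y X B dag (z, tcls Y X B dag stx z t0) = endpoint_set Y X B dag z t0"
proof -
  have "endpoint_set Y X B dag z t = endpoint_set Y X B dag z t0" if "t \<in> tcls Y X B dag stx z t0" for t
    using that unfolding tcls_equivclp mem_Collect_eq
    by (rule equivclp_invariant[OF equivclp_sym]) (rule endpoint_set_tstep)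
  then have "endpoint_set Y X B dag z ` tcls Y X B dag stx z t0 = {endpoint_set Y X B dag z t0}"
    using image_constant[OF tcls_self] image_cong[OF refl] by metis
  then show ?thesis by (simp add: endpoint_class_def)
qed

lemma endpoint_class_state_class:
  assumes v: "state_over Y B dag x \<sigma>" and w: "gwalk X x a stx"
  shows "endpoint_class Y X B dag (state_class Y X B dag stx \<sigma> (x, gcls X x a))
     = Collect (state_eq Y B dag (transport X Y B a \<sigma>))"
proof -
  obtain z qw b where s: "\<sigma> = (z, qw, b)" by (cases \<sigma>) auto
  have td: "tdom Y X B dag stx z ((dag, gcls Y dag qw), b, (x, gcls X x a))"
    using tdom_state v pi1_I[OF w] s by simp
  have "qw \<in> snd (fst ((dag, gcls Y dag qw), b, (x, gcls X x a)))"
    "a \<in> snd (snd (snd ((dag, gcls Y dag qw), b, (x, gcls X x a))))"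
    by (simp_all add: gcls_self)
  then show ?thesis using endpoint_class_tcls[OF td] endpoint_set_repr[OF td] s by simp
qed

lemma state_class_Elt:
  assumes v: "state_over Y B dag x \<sigma>" and g: "g \<in> carrier (grp X x)" and wa: "gwalk X x a stx"
  shows "state_class Y X B dag stx \<sigma> (x, gcls X x (Elt x g # a))
     = state_class Y X B dag stx (transport1 X Y B (Elt x g) \<sigma>) (x, gcls X x a)"
proof -
  obtain z qw b where s: "\<sigma> = (z, qw, b)" by (cases \<sigma>) auto
  have zV: "z \<in> Vb B" and rz: "rho B z = x" and b: "b \<in> bset B z" using v s by auto
  have wg: "gwalk X x [Elt x g] x" using Vb_rho[OF zV] rz g by auto
  have P: "gcomp X (gel X (rho B z) g) (x, gcls X x a) = (x, gcls X x (Elt x g # a))"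
    using gcomp_gcls[OF X wg wa] rz unfolding gel_def by simp
  have wga: "gwalk X x (Elt x g # a) stx" using wg wa by simp
  have "tstep Y X B dag stx z ((dag, gcls Y dag qw), ract B z b g, (x, gcls X x a))
      ((dag, gcls Y dag qw), b, (x, gcls X x (Elt x g # a)))"
    unfolding tstep_def
  proof (intro conjI disjI2)
    show "tdom Y X B dag stx z ((dag, gcls Y dag qw), ract B z b g, (x, gcls X x a))"
      using tdom_state[OF _ pi1_I[OF wa]] v s ract_closed[OF _ _ b, of g] zV rz g by (simp add: Vb_iff)
    show "tdom Y X B dag stx z ((dag, gcls Y dag qw), b, (x, gcls X x (Elt x g # a)))"
      using tdom_state[OF _ pi1_I[OF wga]] v s by simp
    show "\<exists>h\<in>carrier (grp X (rho B z)).
        fst ((dag, gcls Y dag qw), b, (x, gcls X x (Elt x g # a))) = fst ((dag, gcls Y dag qw), ract B z b g, (x, gcls X x a)) \<and>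
        fst (snd ((dag, gcls Y dag qw), ract B z b g, (x, gcls X x a))) = ract B z (fst (snd ((dag, gcls Y dag qw), b, (x, gcls X x (Elt x g # a))))) h \<and>
        snd (snd ((dag, gcls Y dag qw), b, (x, gcls X x (Elt x g # a)))) = gcomp X (gel X (rho B z) h) (snd (snd ((dag, gcls Y dag qw), ract B z b g, (x, gcls X x a))))"
      using P g rz by (intro bexI[of _ g]) simp_all
  qed
  from tcls_tstep[OF this] show ?thesis using s by simp
qed

lemma state_class_edge_sim:
  assumes v: "state_over Y B dag x (z, qw, b)" and f: "f \<in> gcar X" "f \<notin> Vx X" "edn X f = x"
    and wa: "gwalk X (eup X f) a stx"
  shows "equivclp (sstep Y X B dag stx) (state_class Y X B dag stx (z, qw, b) (x, gcls X x (Gen f # a)))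
     (state_class Y X B dag stx (transport1 X Y B (Gen f) (z, qw, b)) (eup X f, gcls X (eup X f) a))"
proof -
  have zV: "z \<in> Vb B" and rz: "rho B z = x" and W: "gwalk Y dag qw (lam B z)" using v by auto
  obtain e g be where E: "e \<in> bcar B" "e \<notin> Vb B" "rho B e = f" "bdn B e = z"
    "g \<in> carrier (grp Y (lam B z))" "be \<in> bset B e" "b = lact B z g (cdn B e be)"
    and Yq: "state_eq Y B dag (transport1 X Y B (Gen f) (z, qw, b)) (cross_edge B z qw e (g, be))"
    using transport1_edge_obtain[OF v f] by metis
  have le: "lam B e \<in> gcar Y" "edn Y (lam B e) = lam B z" using lam_mor(1,2)[OF E(1)] E(4) by auto
  have Wg: "gwalk Y dag (qw @ [Elt (lam B z) g]) (edn Y (lam B e))"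
    using gwalk_append_iff[OF Y W] Vb_lam[OF zV] E(5) le by simp
  have wl: "gwalk X x (Gen f # a) stx" using f wa eup_Vx[OF X f(1)] by simp
  have "state_class Y X B dag stx (z, qw, b) (x, gcls X x (Gen f # a))
      = state_class Y X B dag stx (z, qw @ [Elt (lam B z) g], cdn B e be) (x, gcls X x (Gen f # a))"
    using state_class_state_eq[OF equivclp_sym[OF state_eq_absorb[OF zV W E(5) cdn_bset[OF E(1,4,6)]]]]
      pi1_I[OF wl] rz E(7) by simp
  moreover have "state_class Y X B dag stx (transport1 X Y B (Gen f) (z, qw, b)) (eup X f, gcls X (eup X f) a)
      = state_class Y X B dag stx (cross_edge B z qw e (g, be)) (eup X f, gcls X (eup X f) a)"
    using state_class_state_eq[OF Yq] state_eq_fst[OF Yq] pi1_I[OF wa] rho_bup[OF E(1)] E(3)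
    by (simp add: cross_edge_def)
  moreover have "sstep Y X B dag stx
      (state_class Y X B dag stx (z, qw @ [Elt (lam B z) g], cdn B e be) (x, gcls X x (Gen f # a)))
      (state_class Y X B dag stx (cross_edge B z qw e (g, be)) (eup X f, gcls X (eup X f) a))"
  proof -
    have q: "(dag, gcls Y dag (qw @ [Elt (lam B z) g])) \<in> pi1 Y dag (edn Y (lam B e))"
      using pi1_I[OF Wg] .
    have p: "(x, gcls X x (Gen f # a)) \<in> pi1 X (edn X (rho B e)) stx"
      using pi1_I[OF wl] E(3) f(3) by simp
    have "gcomp X (ggen X (ebar X f)) (x, gcls X x (Gen f # a)) = (eup X f, gcls X (eup X f) a)"
      using gcomp_ggen_ebar[OF X f(1)] wl f(3) by blast
    then have eq: "state_class Y X B dag stx (cross_edge B z qw e (g, be)) (eup X f, gcls X (eup X f) a)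
        = (bup B e, tcls Y X B dag stx (bup B e) (gcomp Y (dag, gcls Y dag (qw @ [Elt (lam B z) g])) (ggen Y (lam B e)),
            cup B e be, gcomp X (ggen X (ebar X (rho B e))) (x, gcls X x (Gen f # a))))"
      using gcomp_ggen_right[OF Y le(1) Wg] E(3) by (simp add: cross_edge_def)
    show ?thesis unfolding sstep_def
      by (rule bexI[of _ e], rule bexI[of _ be], rule bexI[OF _ q], rule bexI[OF _ p])
         (use eq E(1,2,4,6) in simp_all)
  qed
  ultimately show ?thesis by (simp add: r_into_equivclp)
qed

end

section \<open>The relation \<open>\<sim>\<close> on \<open>S\<close>\<close>

context fibrant_gbs
begin

lemma state_class_transport_sim:
  assumes "state_over Y B dag x \<sigma>" and "gwalk X x a stx"
  shows "equivclp (sstep Y X B dag stx) (state_class Y X B dag stx \<sigma> (x, gcls X x a))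
     (state_class Y X B dag stx (transport X Y B a \<sigma>) (stx, gcls X stx []))"
  using assms
proof (induction a arbitrary: \<sigma> x)
  case (Cons l a)
  obtain x' where w: "gwalk X x [l] x'" "gwalk X x' a stx"
    using gwalk_Cons_split[OF X Cons.prems(2)] by blast
  have "equivclp (sstep Y X B dag stx) (state_class Y X B dag stx \<sigma> (x, gcls X x (l # a)))
      (state_class Y X B dag stx (transport1 X Y B l \<sigma>) (x', gcls X x' a))"
  proof (cases l)
    case (Elt u g)
    then have "u = x" "g \<in> carrier (grp X x)" "x' = x" using w(1) by auto
    then show ?thesis using state_class_Elt[OF Cons.prems(1)] w(2) Elt by simp
  next
    case (Gen f)
    then have f: "f \<in> gcar X" "edn X f = x" "x' = eup X f" using w(1) by auto
    show ?thesis
    proof (cases "f \<in> Vx X")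
      case True
      have "gcls X x ([] @ [Gen f] @ a) = gcls X x ([] @ [] @ a)"
        using gcls_gstep[OF gstep_brel(1)[OF X brel_vertex[OF True], of x "[]" a stx]] Cons.prems(2) Gen
        by simp
      then show ?thesis using Gen True f Vx_eup[OF X True] by (cases \<sigma>) (simp add: Vx_iff)
    next
      case False
      obtain z qw b where s: "\<sigma> = (z, qw, b)" by (cases \<sigma>) auto
      show ?thesis using state_class_edge_sim[OF Cons.prems(1)[unfolded s] f(1) False f(2)] w(2) s Gen f(3)
        by simp
    qed
  qed
  then show ?case
    using equivclp_trans Cons.IH[OF transport1_over[OF Cons.prems(1) w(1)] w(2)] by fastforce
qed (use gwalk_end in auto)

lemma endpoint_class_sstep:
  assumes ss: "sstep Y X B dag stx s t"
  shows "endpoint_class Y X B dag s = endpoint_class Y X B dag t"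
proof -
  obtain z b q p where z: "z \<in> bcar B" "z \<notin> Vb B" and b: "b \<in> bset B z"
    and q: "q \<in> pi1 Y dag (edn Y (lam B z))" and p: "p \<in> pi1 X (edn X (rho B z)) stx"
    and s: "s = (bdn B z, tcls Y X B dag stx (bdn B z) (q, cdn B z b, p))"
    and t: "t = (bup B z, tcls Y X B dag stx (bup B z)
               (gcomp Y q (ggen Y (lam B z)), cup B z b, gcomp X (ggen X (ebar X (rho B z))) p))"
    using ss unfolding sstep_def by blast
  define f where "f = rho B z"
  have f: "f \<in> gcar X" "ebar X f \<in> gcar X" using rho_mor(1)[OF z(1)] gog_graph(1)[OF X] f_def by auto
  have le: "lam B z \<in> gcar Y" "lam B (bdn B z) = edn Y (lam B z)" using lam_mor[OF z(1)] by auto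
  obtain qw where qw: "gwalk Y dag qw (lam B (bdn B z))" "q = (dag, gcls Y dag qw)"
    using pi1_repr[OF q] le by metis
  obtain a where a: "gwalk X (edn X f) a stx" "p = (edn X f, gcls X (edn X f) a)"
    using pi1_repr[OF p] f_def by metis
  have v1: "state_over Y B dag (edn X f) (bdn B z, qw, cdn B z b)"
    using bdn_Vb[OF z(1)] rho_mor(2)[OF z(1)] f_def qw(1) cmaps(1)[OF z(1) b] by simp
  have W2: "gwalk Y dag (qw @ [Gen (lam B z)]) (lam B (bup B z))"
    using gwalk_append_iff[OF Y qw(1)] le eup_Vx[OF Y le(1)] lam_bup[OF z(1)] by simp
  have v2: "state_over Y B dag (eup X f) (bup B z, qw @ [Gen (lam B z)], cup B z b)"
    using bup_Vb[OF z(1)] rho_bup[OF z(1)] f_def W2 cup_bset[OF z(1) b] by simp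
  have wa: "gwalk X (eup X (ebar X f)) a stx" using a(1) eup_ebar[OF X f(1)] by simp
  have "endpoint_class Y X B dag s = Collect (state_eq Y B dag (transport X Y B a (bdn B z, qw, cdn B z b)))"
    using endpoint_class_state_class[OF v1 a(1)] s qw(2) a(2) by simp
  moreover have "endpoint_class Y X B dag t
      = Collect (state_eq Y B dag (transport X Y B (Gen (ebar X f) # a) (bup B z, qw @ [Gen (lam B z)], cup B z b)))"
  proof -
    have "gcomp Y q (ggen Y (lam B z)) = (dag, gcls Y dag (qw @ [Gen (lam B z)]))"
      using gcomp_ggen_right[OF Y le(1)] qw le(2) by simp
    moreover have "gcomp X (ggen X (ebar X (rho B z))) p = (eup X f, gcls X (eup X f) (Gen (ebar X f) # a))"
      using gcomp_ggen_left[OF X f(2) wa] a(2) eup_ebar[OF X f(1)] f_def by (simp add: edn_ebar)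
    moreover have "gwalk X (eup X f) (Gen (ebar X f) # a) stx"
      using wa f(2) eup_Vx[OF X f(2)] by (simp add: edn_ebar)
    ultimately show ?thesis using endpoint_class_state_class[OF v2] t by simp
  qed
  moreover have "state_eq Y B dag (transport X Y B (Gen (ebar X f) # a) (bup B z, qw @ [Gen (lam B z)], cup B z b))
      (transport X Y B a (bdn B z, qw, cdn B z b))"
  proof -
    have R: "state_eq Y B dag (transport1 X Y B (Gen (ebar X f)) (bup B z, qw @ [Gen (lam B z)], cup B z b))
        (bdn B z, qw, cdn B z b)"
      using transport1_reverse_edge[OF z b qw(1)] rho_mor(3)[OF z(1)] f_def by simp
    show ?thesis using transport_state_eq[OF R state_eq_over[OF equivclp_sym[OF R] v1] a(1)] by simp
  qed
  ultimately show ?thesis by (simp add: equivclp_class_eq)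
qed

lemma endpoint_class_sim:
  assumes "equivclp (sstep Y X B dag stx) s t"
  shows "endpoint_class Y X B dag s = endpoint_class Y X B dag t"
  using assms by (rule equivclp_invariant) (rule endpoint_class_sstep)

lemma Sp_iff: "s \<in> Sp Y X B dag stx x p \<longleftrightarrow> (\<exists>\<sigma>. state_over Y B dag x \<sigma> \<and> s = state_class Y X B dag stx \<sigma> p)"
proof
  assume "s \<in> Sp Y X B dag stx x p"
  then obtain z q b where h: "s = (z, tcls Y X B dag stx z (q, b, p))" "z \<in> Vb B" "rho B z = x"
    "q \<in> pi1 Y dag (lam B z)" "b \<in> bset B z" unfolding Sp_def by blast
  obtain qw where "gwalk Y dag qw (lam B z)" "q = (dag, gcls Y dag qw)" using pi1_repr[OF h(4)] by metis
  then show "\<exists>\<sigma>. state_over Y B dag x \<sigma> \<and> s = state_class Y X B dag stx \<sigma> p"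
    using h by (intro exI[of _ "(z, qw, b)"]) simp
next
  assume "\<exists>\<sigma>. state_over Y B dag x \<sigma> \<and> s = state_class Y X B dag stx \<sigma> p"
  then obtain z qw b where v: "state_over Y B dag x (z, qw, b)" and s: "s = state_class Y X B dag stx (z, qw, b) p"
    by (metis prod_cases3)
  have "(dag, gcls Y dag qw) \<in> pi1 Y dag (lam B z)" using v by (simp add: pi1_I)
  then show "s \<in> Sp Y X B dag stx x p" unfolding Sp_def using v s by auto
qed

lemma state_class_Sset:
  assumes "state_over Y B dag x \<sigma>" "p \<in> pi1 X x stx"
  shows "state_class Y X B dag stx \<sigma> p \<in> Sset Y X B dag stx"
proof -
  obtain z qw b where s: "\<sigma> = (z, qw, b)" by (cases \<sigma>) auto
  have "tdom Y X B dag stx z ((dag, gcls Y dag qw), b, p)" using tdom_state assms s by simp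
  then show ?thesis unfolding Sset_def using s by (simp only: state_class.simps) blast
qed

lemma Sp_endpoint_class:
  assumes p: "p \<in> pi1 X x stx" and a: "a \<in> snd p" and s: "s \<in> Sp Y X B dag stx x p"
  obtains \<sigma> where "state_over Y B dag x \<sigma>" "s = state_class Y X B dag stx \<sigma> p"
    "endpoint_class Y X B dag s = Collect (state_eq Y B dag (transport X Y B a \<sigma>))"
proof -
  obtain \<sigma> where \<sigma>: "state_over Y B dag x \<sigma>" "s = state_class Y X B dag stx \<sigma> p" using s unfolding Sp_iff by blast
  then show ?thesis
    using that endpoint_class_state_class[OF \<sigma>(1) pi1_memD(1)[OF X p a]] pi1_memD(2)[OF X p a] by simp
qed

lemma simS_iff_endpoint_class:
  assumes p1: "p1 \<in> pi1 X x1 stx" and p2: "p2 \<in> pi1 X x2 stx"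
    and s: "s \<in> Sp Y X B dag stx x1 p1" and t: "t \<in> Sp Y X B dag stx x2 p2"
  shows "simS Y X B dag stx s t \<longleftrightarrow> endpoint_class Y X B dag s = endpoint_class Y X B dag t"
proof
  assume "simS Y X B dag stx s t"
  then show "endpoint_class Y X B dag s = endpoint_class Y X B dag t"
    unfolding simS_def rtranclp_symmetric_eq_equivclp by (elim conjE) (rule endpoint_class_sim)
next
  assume e: "endpoint_class Y X B dag s = endpoint_class Y X B dag t"
  obtain a1 where a1: "a1 \<in> snd p1" "gwalk X x1 a1 stx" "p1 = (x1, gcls X x1 a1)" using pi1_repr[OF p1] by blast
  obtain a2 where a2: "a2 \<in> snd p2" "gwalk X x2 a2 stx" "p2 = (x2, gcls X x2 a2)" using pi1_repr[OF p2] by blast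
  obtain \<sigma> where A: "state_over Y B dag x1 \<sigma>" "s = state_class Y X B dag stx \<sigma> p1"
    "endpoint_class Y X B dag s = Collect (state_eq Y B dag (transport X Y B a1 \<sigma>))"
    using Sp_endpoint_class[OF p1 a1(1) s] by blast
  obtain \<tau> where B: "state_over Y B dag x2 \<tau>" "t = state_class Y X B dag stx \<tau> p2"
    "endpoint_class Y X B dag t = Collect (state_eq Y B dag (transport X Y B a2 \<tau>))"
    using Sp_endpoint_class[OF p2 a2(1) t] by blast
  have "state_eq Y B dag (transport X Y B a1 \<sigma>) (transport X Y B a2 \<tau>)" using e A(3) B(3) by auto
  moreover have "stx \<in> Vx X" using gwalk_end[OF a1(2)] .
  ultimately have N: "state_class Y X B dag stx (transport X Y B a1 \<sigma>) (stx, gcls X stx [])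
      = state_class Y X B dag stx (transport X Y B a2 \<tau>) (stx, gcls X stx [])"
    using state_class_state_eq pi1_I[of X stx "[]" stx] state_over_rho[OF transport_over[OF A(1) a1(2)]] by simp
  have "equivclp (sstep Y X B dag stx) s t"
    using equivclp_trans[OF state_class_transport_sim[OF A(1) a1(2)], unfolded N,
        OF equivclp_sym[OF state_class_transport_sim[OF B(1) a2(2)]]] A(2) a1(3) B(2) a2(3)
    by simp
  moreover have "s \<in> Sset Y X B dag stx" "t \<in> Sset Y X B dag stx"
    using state_class_Sset A(1,2) B(1,2) p1 p2 by simp_all
  ultimately show "simS Y X B dag stx s t" unfolding simS_def rtranclp_symmetric_eq_equivclp by blast
qed

end

section \<open>The bijections \<open>S(p\<^sub>1) \<rightarrow> S(p\<^sub>2)\<close>\<close>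

context fibrant_gbs
begin

lemma inj_on_endpoint_class_Sp:
  assumes p: "p \<in> pi1 X x stx"
  shows "inj_on (endpoint_class Y X B dag) (Sp Y X B dag stx x p)"
proof (rule inj_onI)
  fix s1 s2
  assume s1: "s1 \<in> Sp Y X B dag stx x p" and s2: "s2 \<in> Sp Y X B dag stx x p"
    and e: "endpoint_class Y X B dag s1 = endpoint_class Y X B dag s2"
  obtain a where a: "a \<in> snd p" "gwalk X x a stx" using pi1_repr[OF p] by blast
  obtain \<sigma>1 where A: "state_over Y B dag x \<sigma>1" "s1 = state_class Y X B dag stx \<sigma>1 p"
    "endpoint_class Y X B dag s1 = Collect (state_eq Y B dag (transport X Y B a \<sigma>1))"
    using Sp_endpoint_class[OF p a(1) s1] by blast
  obtain \<sigma>2 where B: "state_over Y B dag x \<sigma>2" "s2 = state_class Y X B dag stx \<sigma>2 p"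
    "endpoint_class Y X B dag s2 = Collect (state_eq Y B dag (transport X Y B a \<sigma>2))"
    using Sp_endpoint_class[OF p a(1) s2] by blast
  have "state_eq Y B dag (transport X Y B a \<sigma>1) (transport X Y B a \<sigma>2)"
    using e A(3) B(3) by (simp add: Collect_equivclp_eq_iff)
  from transport_state_eq[OF this transport_over[OF A(1) a(2)] inv_word_gwalk[OF X a(2)]]
  have "state_eq Y B dag \<sigma>1 \<sigma>2"
    using transport_inv_word[OF A(1) a(2)] transport_inv_word[OF B(1) a(2)]
    by (blast intro: equivclp_trans equivclp_sym)
  then show "s1 = s2"
    using state_class_state_eq[of dag \<sigma>1 \<sigma>2 p stx] p state_over_rho[OF A(1)] A(2) B(2) by simp
qed

lemma endpoint_class_Sp_subset:
  assumes p: "p \<in> pi1 X x stx" and p': "p' \<in> pi1 X x' stx"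
  shows "endpoint_class Y X B dag ` Sp Y X B dag stx x p \<subseteq> endpoint_class Y X B dag ` Sp Y X B dag stx x' p'"
proof
  fix c assume "c \<in> endpoint_class Y X B dag ` Sp Y X B dag stx x p"
  then obtain s where s: "s \<in> Sp Y X B dag stx x p" and c: "c = endpoint_class Y X B dag s" by blast
  obtain a where a: "a \<in> snd p" "gwalk X x a stx" using pi1_repr[OF p] by blast
  obtain a' where a': "gwalk X x' a' stx" "p' = (x', gcls X x' a')" using pi1_repr[OF p'] by blast
  obtain \<sigma> where A: "state_over Y B dag x \<sigma>"
    "endpoint_class Y X B dag s = Collect (state_eq Y B dag (transport X Y B a \<sigma>))"
    using Sp_endpoint_class[OF p a(1) s] by blast
  define \<tau> where "\<tau> = transport X Y B (inv_word X a') (transport X Y B a \<sigma>)"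
  have v0: "state_over Y B dag stx (transport X Y B a \<sigma>)" by (rule transport_over[OF A(1) a(2)])
  have v: "state_over Y B dag x' \<tau>" unfolding \<tau>_def by (rule transport_over[OF v0 inv_word_gwalk[OF X a'(1)]])
  have t: "state_class Y X B dag stx \<tau> p' \<in> Sp Y X B dag stx x' p'" unfolding Sp_iff using v by blast
  have "endpoint_class Y X B dag (state_class Y X B dag stx \<tau> p') = Collect (state_eq Y B dag (transport X Y B a' \<tau>))"
    using endpoint_class_state_class[OF v a'(1)] a'(2) by simp
  also have "\<dots> = c"
    using transport_inv_word'[OF v0 a'(1)] A(2) c unfolding \<tau>_def by (simp add: equivclp_class_eq)
  finally show "c \<in> endpoint_class Y X B dag ` Sp Y X B dag stx x' p'" using t by force
qed

end

fun prepend_word :: "('y, 'gy) letter list \<Rightarrow> 'b \<times> ('y, 'gy) letter list \<times> 'c \<Rightarrow> 'b \<times> ('y, 'gy) letter list \<times> 'c" where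
  "prepend_word rw (z, qw, b) = (z, rw @ qw, b)"

lemma transport1_prepend_word: "transport1 X Y B l (prepend_word rw \<sigma>) = prepend_word rw (transport1 X Y B l \<sigma>)"
  by (cases \<sigma>, cases l) (auto simp: cross_edge_def)

lemma transport_prepend_word: "transport X Y B a (prepend_word rw \<sigma>) = prepend_word rw (transport X Y B a \<sigma>)"
  by (induction a arbitrary: \<sigma>) (simp_all add: transport1_prepend_word)

context fibrant_gbs
begin

lemma state_step_prepend_word:
  assumes st: "state_step Y B dag \<sigma> \<tau>" and rw: "gwalk Y dag rw dag"
  shows "state_step Y B dag (prepend_word rw \<sigma>) (prepend_word rw \<tau>)"
proof -
  obtain z qw b qw' b' where s: "\<sigma> = (z, qw, b)" "\<tau> = (z, qw', b')" and zV: "z \<in> Vb B"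
    and W: "gwalk Y dag qw (lam B z)" and W': "gwalk Y dag qw' (lam B z)"
    and b: "b \<in> bset B z" "b' \<in> bset B z"
    and R: "(gstep Y dag qw qw' \<and> b = b') \<or>
      (\<exists>h\<in>carrier (grp Y (lam B z)). qw = qw' @ [Elt (lam B z) h] \<and> b' = lact B z h b)"
    using st unfolding state_step_def by blast
  have "(gstep Y dag (rw @ qw) (rw @ qw') \<and> b = b') \<or>
      (\<exists>h\<in>carrier (grp Y (lam B z)). rw @ qw = (rw @ qw') @ [Elt (lam B z) h] \<and> b' = lact B z h b)"
    using R gstep_append_left[OF Y _ rw] by auto
  then show ?thesis
    unfolding state_step_def using s zV gwalk_append_iff[OF Y rw] W W' b by simp
qed

lemma state_eq_prepend_word:
  assumes "state_eq Y B dag \<sigma> \<tau>" and "gwalk Y dag rw dag"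
  shows "state_eq Y B dag (prepend_word rw \<sigma>) (prepend_word rw \<tau>)"
  using assms(1)
  by (rule equivclp_map_on[where I = "\<lambda>_. True", OF _ TrueI])
     (simp_all add: r_into_equivclp state_step_prepend_word[OF _ assms(2)])

lemma tstep_gcomp_left:
  assumes st: "tstep Y X B dag stx z t1 t2" and r: "r \<in> pi1 Y dag dag"
  shows "tstep Y X B dag stx z (gcomp Y r (fst t1), snd t1) (gcomp Y r (fst t2), snd t2)"
proof -
  have td1: "tdom Y X B dag stx z t1" and td2: "tdom Y X B dag stx z t2" using st unfolding tstep_def by auto
  note T1 = tdomD[OF td1] and T2 = tdomD[OF td2]
  have "tdom Y X B dag stx z (gcomp Y r (fst t1), snd t1)" "tdom Y X B dag stx z (gcomp Y r (fst t2), snd t2)"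
    using T1 T2 gcomp_pi1[OF Y r] unfolding tdom_def by simp_all
  moreover have "gcomp Y r (gcomp Y (fst t2) (gel Y (lam B z) h))
      = gcomp Y (gcomp Y r (fst t2)) (gel Y (lam B z) h)" if "h \<in> carrier (grp Y (lam B z))" for h
    using gcomp_assoc[OF Y r T2(2) gel_pi1[OF Vb_lam[OF T1(1)] that]] by simp
  ultimately show ?thesis using st unfolding tstep_def by auto
qed

lemma tcls_gcomp_left:
  assumes t: "t \<in> tcls Y X B dag stx z t0" and r: "r \<in> pi1 Y dag dag"
  shows "tcls Y X B dag stx z (gcomp Y r (fst t), snd t) = tcls Y X B dag stx z (gcomp Y r (fst t0), snd t0)"
proof -
  have "equivclp (tstep Y X B dag stx z) t0 t" using t by (simp add: tcls_equivclp)
  then show ?thesis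
    by (rule equivclp_invariant[OF equivclp_sym]) (rule tcls_tstep[OF tstep_gcomp_left[OF _ r]])
qed

lemma Sact_state_class:
  assumes v: "state_over Y B dag x \<sigma>" and rw: "gwalk Y dag rw dag"
  shows "Sact Y X B dag stx (dag, gcls Y dag rw) (state_class Y X B dag stx \<sigma> p)
    = state_class Y X B dag stx (prepend_word rw \<sigma>) p"
proof -
  obtain z qw b where s: "\<sigma> = (z, qw, b)" by (cases \<sigma>) auto
  define r where "r = (dag, gcls Y dag rw)"
  define t0 where "t0 = ((dag, gcls Y dag qw), b, p)"
  have r: "r \<in> pi1 Y dag dag" unfolding r_def by (rule pi1_I[OF rw])
  have g0: "gcomp Y r (fst t0) = (dag, gcls Y dag (rw @ qw))"
    unfolding r_def t0_def using gcomp_gcls[OF Y rw, of qw "lam B z"] v s by simp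
  have "{tcls Y X B dag stx z (gcomp Y r q, b', p') | q b' p'. (q, b', p') \<in> tcls Y X B dag stx z t0}
      = {tcls Y X B dag stx z (gcomp Y r (fst t0), snd t0)}"
  proof (rule Set.set_eqI, rule iffI)
    fix M assume "M \<in> {tcls Y X B dag stx z (gcomp Y r q, b', p') | q b' p'. (q, b', p') \<in> tcls Y X B dag stx z t0}"
    then obtain q b' p' where "M = tcls Y X B dag stx z (gcomp Y r q, b', p')" "(q, b', p') \<in> tcls Y X B dag stx z t0"
      by blast
    then show "M \<in> {tcls Y X B dag stx z (gcomp Y r (fst t0), snd t0)}"
      using tcls_gcomp_left[OF _ r] by fastforce
  next
    fix M assume "M \<in> {tcls Y X B dag stx z (gcomp Y r (fst t0), snd t0)}"
    then show "M \<in> {tcls Y X B dag stx z (gcomp Y r q, b', p') | q b' p'. (q, b', p') \<in> tcls Y X B dag stx z t0}"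
      using tcls_self[of t0]
      by (intro CollectI exI[of _ "fst t0"] exI[of _ "fst (snd t0)"] exI[of _ "snd (snd t0)"]) simp
  qed
  then show ?thesis unfolding Sact_def using s g0 unfolding t0_def r_def by simp
qed

lemma Sact_Sp_endpoint_class:
  assumes p: "p \<in> pi1 X x stx" and a: "a \<in> snd p" and s: "s \<in> Sp Y X B dag stx x p"
    and rw: "gwalk Y dag rw dag"
  obtains \<sigma> where "Sact Y X B dag stx (dag, gcls Y dag rw) s \<in> Sp Y X B dag stx x p"
    "endpoint_class Y X B dag s = Collect (state_eq Y B dag (transport X Y B a \<sigma>))"
    "endpoint_class Y X B dag (Sact Y X B dag stx (dag, gcls Y dag rw) s)
      = Collect (state_eq Y B dag (prepend_word rw (transport X Y B a \<sigma>)))"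
proof -
  obtain \<sigma> where A: "state_over Y B dag x \<sigma>" "s = state_class Y X B dag stx \<sigma> p"
    "endpoint_class Y X B dag s = Collect (state_eq Y B dag (transport X Y B a \<sigma>))"
    using Sp_endpoint_class[OF p a s] by blast
  have eq: "Sact Y X B dag stx (dag, gcls Y dag rw) s = state_class Y X B dag stx (prepend_word rw \<sigma>) p"
    using Sact_state_class[OF A(1) rw] A(2) by simp
  have vp: "state_over Y B dag x (prepend_word rw \<sigma>)"
    using A(1) gwalk_append_iff[OF Y rw] by (cases \<sigma>) simp
  have "Sact Y X B dag stx (dag, gcls Y dag rw) s \<in> Sp Y X B dag stx x p" unfolding Sp_iff using eq vp by blast
  moreover have "endpoint_class Y X B dag (Sact Y X B dag stx (dag, gcls Y dag rw) s)
      = Collect (state_eq Y B dag (prepend_word rw (transport X Y B a \<sigma>)))"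
    using endpoint_class_state_class[OF vp pi1_memD(1)[OF X p a]] eq pi1_memD(2)[OF X p a]
    by (simp add: transport_prepend_word)
  ultimately show ?thesis using that A(3) by blast
qed

lemma Sact_endpoint_class_cong:
  assumes p1: "p1 \<in> pi1 X x1 stx" and p2: "p2 \<in> pi1 X x2 stx" and r: "r \<in> pi1 Y dag dag"
    and s: "s \<in> Sp Y X B dag stx x1 p1" and t: "t \<in> Sp Y X B dag stx x2 p2"
    and e: "endpoint_class Y X B dag s = endpoint_class Y X B dag t"
  shows "Sact Y X B dag stx r s \<in> Sp Y X B dag stx x1 p1"
    and "endpoint_class Y X B dag (Sact Y X B dag stx r s) = endpoint_class Y X B dag (Sact Y X B dag stx r t)"
proof -
  obtain rw where rw: "gwalk Y dag rw dag" "r = (dag, gcls Y dag rw)" using pi1_repr[OF r] by blast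
  obtain a1 where a1: "a1 \<in> snd p1" using pi1_repr[OF p1] by blast
  obtain a2 where a2: "a2 \<in> snd p2" using pi1_repr[OF p2] by blast
  obtain \<sigma> where A: "Sact Y X B dag stx r s \<in> Sp Y X B dag stx x1 p1"
    "endpoint_class Y X B dag s = Collect (state_eq Y B dag (transport X Y B a1 \<sigma>))"
    "endpoint_class Y X B dag (Sact Y X B dag stx r s) = Collect (state_eq Y B dag (prepend_word rw (transport X Y B a1 \<sigma>)))"
    using Sact_Sp_endpoint_class[OF p1 a1 s rw(1)] rw(2) by metis
  obtain \<tau> where B: "endpoint_class Y X B dag t = Collect (state_eq Y B dag (transport X Y B a2 \<tau>))"
    "endpoint_class Y X B dag (Sact Y X B dag stx r t) = Collect (state_eq Y B dag (prepend_word rw (transport X Y B a2 \<tau>)))"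
    using Sact_Sp_endpoint_class[OF p2 a2 t rw(1)] rw(2) by metis
  show "Sact Y X B dag stx r s \<in> Sp Y X B dag stx x1 p1" by (rule A(1))
  have "state_eq Y B dag (transport X Y B a1 \<sigma>) (transport X Y B a2 \<tau>)"
    using e A(2) B(1) by (simp add: Collect_equivclp_eq_iff)
  then show "endpoint_class Y X B dag (Sact Y X B dag stx r s) = endpoint_class Y X B dag (Sact Y X B dag stx r t)"
    using A(3) B(2) state_eq_prepend_word[OF _ rw(1)] by (simp add: Collect_equivclp_eq_iff)
qed

end

theorem mainTheorem4:
  fixes Y :: "('y, 'gy) gog" and X :: "('x, 'gx) gog"
    and B :: "('b, 'c, 'y, 'x, 'gy, 'gx) gbs"
    and dag :: 'y and st :: 'x and x1 x2 :: 'x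
    and p1 p2 :: "('x, 'gx) gmor"
  assumes "is_gog Y" and "is_gog X" and "is_gbs Y X B" and "left_fibrant Y X B"
    and "dag \<in> Vx Y" and "st \<in> Vx X"
    and "x1 \<in> Vx X" and "x2 \<in> Vx X"
    and "p1 \<in> pi1 X x1 st" and "p2 \<in> pi1 X x2 st"
  shows "\<exists>f. bij_betw f (Sp Y X B dag st x1 p1) (Sp Y X B dag st x2 p2)
           \<and> (\<forall>s\<in>Sp Y X B dag st x1 p1. \<forall>t\<in>Sp Y X B dag st x2 p2.
                 simS Y X B dag st s t \<longleftrightarrow> t = f s)
           \<and> (\<forall>r\<in>pi1 Y dag dag. \<forall>s\<in>Sp Y X B dag st x1 p1.
                 f (Sact Y X B dag st r s) = Sact Y X B dag st r (f s))"
proof -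
  interpret fibrant_gbs Y X B using assms(1-4) by unfold_locales
  note p1 = assms(9) and p2 = assms(10)
  let ?\<psi> = "endpoint_class Y X B dag" and ?S1 = "Sp Y X B dag st x1 p1" and ?S2 = "Sp Y X B dag st x2 p2"
  have inj2: "inj_on ?\<psi> ?S2" by (rule inj_on_endpoint_class_Sp[OF p2])
  obtain f where f: "bij_betw f ?S1 ?S2" and f\<psi>: "\<And>s. s \<in> ?S1 \<Longrightarrow> ?\<psi> (f s) = ?\<psi> s"
    using matching_by_invariant[OF inj_on_endpoint_class_Sp[OF p1] inj2]
      endpoint_class_Sp_subset[OF p1 p2] endpoint_class_Sp_subset[OF p2 p1] by blast
  have fS2: "f s \<in> ?S2" if "s \<in> ?S1" for s using f that by (auto simp: bij_betw_def)
  have "simS Y X B dag st s t \<longleftrightarrow> t = f s" if "s \<in> ?S1" "t \<in> ?S2" for s t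
    using simS_iff_endpoint_class[OF p1 p2 that] inj_onD[OF inj2] fS2 f\<psi> that by metis
  moreover have "f (Sact Y X B dag st r s) = Sact Y X B dag st r (f s)" if "r \<in> pi1 Y dag dag" "s \<in> ?S1" for r s
  proof -
    note cong = Sact_endpoint_class_cong[OF p1 p2 that(1) that(2) fS2[OF that(2)] f\<psi>[OF that(2), symmetric]]
    note cong' = Sact_endpoint_class_cong[OF p2 p1 that(1) fS2[OF that(2)] that(2) f\<psi>[OF that(2)]]
    show ?thesis
      using inj_onD[OF inj2 _ fS2[OF cong(1)] cong'(1)] f\<psi>[OF cong(1)] cong(2) by simp
  qed
  ultimately show ?thesis using f by blast
qed

end
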